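(* Let $p\ge2$, $m\in\mathbb{N}$, $a,b>0$, consider the multiple regression function $f(x)=(1,x^T)^T$ on the rectangular design region $\mathcal{X}=[u_1,v_1]\times\cdots\times[u_{p-1},v_{p-1}]$ with $u_i<v_i$, and let $\beta=(\beta_0,\ldots,\beta_{p-1})^T$ with $\beta_i\neq0$ for $i=1,\ldots,p-1$. Let $d=(d_1,\ldots,d_{p-1})$ with $d_i=v_i$ if $\beta_i>0$ and $d_i=u_i$ if $\beta_i<0$. For $z>0$ define $$w_p^*(z)=\frac{2}{p+\sqrt{(p-2)^2+4(p-1)\dfrac{1+\frac{m}{b}\exp(f(d)^T\beta)}{1+\frac{m}{b}\exp(f(d)^T\beta-z)}}},\qquad w_1^*(z)=\frac{1-w_p^*(z)}{p-1}.$$ Then the equation $$0=m\Bigl((p-1)w_1^*(z)e^{f(d)^T\beta-z}+w_p^*(z)e^{f(d)^T\beta}\Bigr)\bigl(z(p-1)w_1^*(z)-2\bigr)+b\bigl(zp\,w_1^*(z)-2\bigr)$$ has a unique solution $z^*\in(0,\infty)$. If moreover $z^*\le\min_{i=1,\ldots,p-1}|\beta_i|(v_i-u_i)$, then the design $\xi^*$ which assigns weight $w_1^*(z^* )$ to each of the points $d-(z^*/\beta_i)e_i$, $i=1,\ldots,p-1$, and weight $w_p^*(z^* )$ to the point $d$, is $D$-optimal in the Poisson–Gamma model on $\mathcal{X}$.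
   Context: $e_i$ denotes the $i$-th standard unit vector of $\mathbb{R}^{p-1}$ and $e_1$ in the information matrix formula denotes the first standard unit vector of $\mathbb{R}^p$. A design $\xi$ is a probability measure on $\mathcal{X}$ with finite support $x_1,\ldots,x_l$ and weights $w_1,\ldots,w_l\ge0$, $\sum_j w_j=1$. The Poisson information matrix is $M_{Po}(\xi;\beta)=\sum_{j=1}^l w_j\exp(f(x_j)^T\beta)f(x_j)f(x_j)^T$, and the Poisson–Gamma information matrix is $M(\xi;\beta)=\frac{a}{b}\Bigl(M_{Po}(\xi;\beta)-\frac{M_{Po}(\xi;\beta)e_1e_1^TM_{Po}(\xi;\beta)}{e_1^TM_{Po}(\xi;\beta)e_1+b/m}\Bigr)$. A design $\xi^*$ is $D$-optimal if $M(\xi^*;\beta)$ is regular and $\det M(\xi^*;\beta)\ge\det M(\xi;\beta)$ for all designs $\xi$ on $\mathcal{X}$. *)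

theory Defs
  imports Complex_Main "Jordan_Normal_Form.Determinant"
begin

definition fvec :: "real vec \<Rightarrow> real vec" where
  "fvec x = vCons 1 x"

(* Rectangular design region [u_1,v_1] x ... x [u_(p-1),v_(p-1)] (0-based indices). *)
definition region :: "nat \<Rightarrow> real vec \<Rightarrow> real vec \<Rightarrow> real vec set" where
  "region p u v = {x. dim_vec x = p - 1 \<and> (\<forall>i<p - 1. u $ i \<le> x $ i \<and> x $ i \<le> v $ i)}"

(* A design = probability measure with finite support, given by its weight function. *)
definition supp :: "(real vec \<Rightarrow> real) \<Rightarrow> real vec set" where
  "supp w = {x. w x \<noteq> 0}"

definition is_design :: "real vec set \<Rightarrow> (real vec \<Rightarrow> real) \<Rightarrow> bool" where
  "is_design X w \<longleftrightarrow> finite (supp w) \<and> supp w \<subseteq> X \<and> (\<forall>x. 0 \<le> w x)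
      \<and> (\<Sum>x\<in>supp w. w x) = 1"

definition M_Po :: "nat \<Rightarrow> (real vec \<Rightarrow> real) \<Rightarrow> real vec \<Rightarrow> real mat" where
  "M_Po p w \<beta> = mat p p (\<lambda>(i,j). \<Sum>x\<in>supp w. w x * exp (fvec x \<bullet> \<beta>) * (fvec x $ i) * (fvec x $ j))"

definition M_PG :: "nat \<Rightarrow> real \<Rightarrow> real \<Rightarrow> nat \<Rightarrow> (real vec \<Rightarrow> real) \<Rightarrow> real vec \<Rightarrow> real mat" where
  "M_PG p a b m w \<beta> =
     (let P = M_Po p w \<beta>;
          e1 = unit_vec p 0
      in (a / b) \<cdot>\<^sub>m (P - (1 / (e1 \<bullet> (P *\<^sub>v e1) + b / real m)) \<cdot>\<^sub>m
                          (P * mat p p (\<lambda>(i,j). e1 $ i * e1 $ j) * P)))"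

definition D_optimal :: "nat \<Rightarrow> real \<Rightarrow> real \<Rightarrow> nat \<Rightarrow> real vec set \<Rightarrow> real vec \<Rightarrow> (real vec \<Rightarrow> real) \<Rightarrow> bool" where
  "D_optimal p a b m X \<beta> w \<longleftrightarrow> is_design X w \<and> det (M_PG p a b m w \<beta>) \<noteq> 0 \<and>
     (\<forall>w'. is_design X w' \<longrightarrow> det (M_PG p a b m w' \<beta>) \<le> det (M_PG p a b m w \<beta>))"

end

theory Submission
  imports Defs
begin

text \<open>Up to the factor \<open>a/b\<close>, the Poisson--Gamma information matrix is the correction
  \<open>M - M e\<^sub>1 e\<^sub>1\<^sup>T M / (e\<^sub>1\<^sup>T M e\<^sub>1 + b/m)\<close> of the Poisson matrix \<open>M\<close>. For the saturated design
  \<open>\<xi>\<^sup>*\<close> its inverse is explicit in the affine coordinates of a point with respect to the support,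
  and \<open>\<xi>\<^sup>*\<close> is D-optimal once the sensitivity function is at most \<open>p\<close> on the region: each
  information matrix is dominated by a sum of rank-one terms, so \<open>tr (M(\<xi>\<^sup>*)\<^sup>-\<^sup>1 M(\<xi>)) \<le> p\<close>, and an
  LDL factorisation, Hadamard's inequality and AM-GM turn this into \<open>det M(\<xi>) \<le> det M(\<xi>\<^sup>*)\<close>.

  If the linear predictor at \<open>x\<close> is smaller by \<open>s \<ge> 0\<close> than at the corner \<open>d\<close>, the sensitivity
  at \<open>x\<close> is at most \<open>e\<^sup>-\<^sup>s (K\<^sub>0 (1 - s/z)\<^sup>2 + K\<^sub>1 s\<^sup>2/z\<^sup>2 - D) + C\<close>. It equals \<open>p\<close> at the support points
  \<open>s = 0\<close> and \<open>s = z\<close>, and the equation \<open>g z = 0\<close> makes \<open>s = z\<close> a critical point; the sign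
  pattern of the derivative then rules out larger values. The root \<open>z\<^sup>*\<close> is unique because
  \<open>g\<close> divided by the positive factor \<open>m e\<^sub>1\<^sup>T M e\<^sub>1 + b\<close> is strictly increasing.\<close>

section \<open>Quadratic forms and determinants\<close>

text \<open>Square matrices are functions \<open>nat \<Rightarrow> nat \<Rightarrow> real\<close> of which only the indices below
  \<open>n\<close> matter; \<open>mat_of\<close> turns them into matrices for \<open>det\<close>.\<close>

definition quad_form :: "nat \<Rightarrow> (nat \<Rightarrow> nat \<Rightarrow> real) \<Rightarrow> (nat \<Rightarrow> real) \<Rightarrow> real" where
  "quad_form n A v = (\<Sum>i<n. \<Sum>j<n. v i * A i j * v j)"

definition symmetric_on :: "nat \<Rightarrow> (nat \<Rightarrow> nat \<Rightarrow> real) \<Rightarrow> bool" where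
  "symmetric_on n A \<longleftrightarrow> (\<forall>i<n. \<forall>j<n. A i j = A j i)"

definition pos_semidef :: "nat \<Rightarrow> (nat \<Rightarrow> nat \<Rightarrow> real) \<Rightarrow> bool" where
  "pos_semidef n A \<longleftrightarrow> (\<forall>v. 0 \<le> quad_form n A v)"

definition pos_def :: "nat \<Rightarrow> (nat \<Rightarrow> nat \<Rightarrow> real) \<Rightarrow> bool" where
  "pos_def n A \<longleftrightarrow> (\<forall>v. (\<exists>i<n. v i \<noteq> 0) \<longrightarrow> 0 < quad_form n A v)"

definition unit_lower_triangular :: "(nat \<Rightarrow> nat \<Rightarrow> real) \<Rightarrow> bool" where
  "unit_lower_triangular B \<longleftrightarrow> (\<forall>i. B i i = 1) \<and> (\<forall>i k. i < k \<longrightarrow> B i k = 0)"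

definition mat_of :: "nat \<Rightarrow> (nat \<Rightarrow> nat \<Rightarrow> real) \<Rightarrow> real mat" where
  "mat_of n A = mat n n (\<lambda>(i, j). A i j)"

lemma mat_of_carrier [simp]: "mat_of n A \<in> carrier_mat n n"
  unfolding mat_of_def by simp

lemma mat_of_dims [simp]: "dim_row (mat_of n A) = n" "dim_col (mat_of n A) = n"
  unfolding mat_of_def by simp_all

lemma mat_of_index [simp]: "i < n \<Longrightarrow> j < n \<Longrightarrow> mat_of n A $$ (i, j) = A i j"
  unfolding mat_of_def by simp

lemma mat_of_mult: "mat_of n A * mat_of n B = mat_of n (\<lambda>i j. \<Sum>k<n. A i k * B k j)"
  by (rule eq_matI) (auto simp: mat_of_def scalar_prod_def lessThan_atLeast0 intro!: sum.cong)

lemma pos_def_imp_pos_semidef: "pos_def n A \<Longrightarrow> pos_semidef n A"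
  unfolding pos_def_def pos_semidef_def
proof (intro allI impI)
  fix v assume A: "\<forall>v. (\<exists>i<n. v i \<noteq> 0) \<longrightarrow> 0 < quad_form n A v"
  show "0 \<le> quad_form n A v"
  proof (cases "\<exists>i<n. v i \<noteq> 0")
    case True
    then show ?thesis using A by (simp add: less_imp_le)
  next
    case False
    then show ?thesis by (simp add: quad_form_def)
  qed
qed

lemma quad_form_supported:
  assumes "K \<subseteq> {..<n}" and "\<And>l. l \<notin> K \<Longrightarrow> v l = 0"
  shows "quad_form n A v = (\<Sum>i\<in>K. \<Sum>j\<in>K. v i * A i j * v j)"
proof -
  have "(\<Sum>j<n. v i * A i j * v j) = (\<Sum>j\<in>K. v i * A i j * v j)" for i
    using assms by (intro sum.mono_neutral_right) auto
  then have "quad_form n A v = (\<Sum>i<n. \<Sum>j\<in>K. v i * A i j * v j)"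
    unfolding quad_form_def by simp
  also have "\<dots> = (\<Sum>i\<in>K. \<Sum>j\<in>K. v i * A i j * v j)"
    using assms by (intro sum.mono_neutral_right) auto
  finally show ?thesis .
qed

lemma quad_form_single:
  "i < n \<Longrightarrow> quad_form n A (\<lambda>l. if l = i then t else 0) = t * A i i * t"
  by (subst quad_form_supported[of "{i}"]) auto

lemma quad_form_pair:
  assumes "i < n" "j < n" "i \<noteq> j"
  shows "quad_form n A (\<lambda>l. if l = i then s else if l = j then t else 0)
       = s * A i i * s + s * A i j * t + t * A j i * s + t * A j j * t"
  using assms by (subst quad_form_supported[of "{i, j}"]) auto

lemma pos_semidef_zero_diag_imp_zero:
  assumes "pos_semidef n A" "symmetric_on n A" "i < n" "j < n" "A i i = 0"
  shows "A i j = 0"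
proof (cases "i = j")
  case False
  have "0 \<le> 2 * t * A i j + A j j" for t
  proof -
    have "0 \<le> quad_form n A (\<lambda>l. if l = i then t else if l = j then 1 else 0)"
      using assms(1) unfolding pos_semidef_def by blast
    also have "\<dots> = 2 * t * A i j + A j j"
      using quad_form_pair[OF assms(3,4) False] assms(2-5) unfolding symmetric_on_def by simp
    finally show ?thesis .
  qed
  from this[of "- (A j j + 1) / (2 * A i j)"] show ?thesis
    by (cases "A i j = 0") (simp_all add: field_simps)
qed (use assms in simp)

definition schur_complement :: "(nat \<Rightarrow> nat \<Rightarrow> real) \<Rightarrow> nat \<Rightarrow> nat \<Rightarrow> real" where
  "schur_complement A i j = A (Suc i) (Suc j) - A (Suc i) 0 * A 0 (Suc j) / A 0 0"

text \<open>The quadratic form of the Schur complement is that of \<open>A\<close> at the vector minimising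
  over the first coordinate.\<close>

lemma quad_form_schur_complement:
  assumes "symmetric_on (Suc n) A"
  shows "quad_form n (schur_complement A) v
       = quad_form (Suc n) A (\<lambda>k. if k = 0 then - (\<Sum>j<n. A 0 (Suc j) * v j) / A 0 0 else v (k - 1))"
proof -
  define a where "a = A 0 0"
  define T where "T = (\<Sum>j<n. A 0 (Suc j) * v j)"
  define w where "w = (\<lambda>k. if k = 0 then - T / a else v (k - 1))"
  define R where "R = (\<Sum>i<n. \<Sum>j<n. v i * A (Suc i) (Suc j) * v j)"
  have T': "(\<Sum>i<n. v i * A (Suc i) 0) = T"
    unfolding T_def using assms unfolding symmetric_on_def by (intro sum.cong) (auto simp: mult.commute)
  have "quad_form (Suc n) A w
      = (w 0 * a * w 0 + (\<Sum>j<n. w 0 * A 0 (Suc j) * v j))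
        + (\<Sum>i<n. v i * A (Suc i) 0 * w 0 + (\<Sum>j<n. v i * A (Suc i) (Suc j) * v j))"
    unfolding quad_form_def by (simp only: sum.lessThan_Suc_shift) (simp add: w_def a_def)
  also have "\<dots> = w 0 * a * w 0 + w 0 * T + w 0 * (\<Sum>i<n. v i * A (Suc i) 0) + R"
    unfolding T_def R_def by (simp add: sum.distrib sum_distrib_left algebra_simps)
  also have "\<dots> = w 0 * a * w 0 + 2 * w 0 * T + R"
    using T' by simp
  also have "\<dots> = R - T * T / a"
    by (cases "a = 0") (simp_all add: w_def field_simps power2_eq_square)
  finally have rhs: "quad_form (Suc n) A w = R - T * T / a" .
  have "quad_form n (schur_complement A) v
      = R - (\<Sum>i<n. \<Sum>j<n. (v i * A (Suc i) 0) * (A 0 (Suc j) * v j) / a)"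
    unfolding quad_form_def schur_complement_def R_def a_def by (simp add: sum_subtractf algebra_simps)
  also have "\<dots> = R - (\<Sum>i<n. (v i * A (Suc i) 0) * T / a)"
    unfolding T_def by (simp add: sum_distrib_left sum_divide_distrib)
  also have "\<dots> = R - (\<Sum>i<n. v i * A (Suc i) 0) * T / a"
    by (simp add: sum_distrib_right sum_divide_distrib)
  also have "\<dots> = R - T * T / a"
    using T' by simp
  finally show ?thesis using rhs unfolding w_def T_def a_def by simp
qed

lemma symmetric_on_schur_complement:
  assumes "symmetric_on (Suc n) A"
  shows "symmetric_on n (schur_complement A)"
  unfolding symmetric_on_def schur_complement_def
proof (intro allI impI)
  fix i j assume "i < n" "j < n"
  then have "A (Suc i) (Suc j) = A (Suc j) (Suc i)" "A (Suc i) 0 = A 0 (Suc i)" "A 0 (Suc j) = A (Suc j) 0"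
    using assms unfolding symmetric_on_def by auto
  then show "A (Suc i) (Suc j) - A (Suc i) 0 * A 0 (Suc j) / A 0 0
      = A (Suc j) (Suc i) - A (Suc j) 0 * A 0 (Suc i) / A 0 0"
    by simp
qed

lemma pos_semidef_schur_complement:
  "symmetric_on (Suc n) A \<Longrightarrow> pos_semidef (Suc n) A \<Longrightarrow> pos_semidef n (schur_complement A)"
  unfolding pos_semidef_def by (simp add: quad_form_schur_complement)

lemma pos_def_schur_complement:
  assumes "symmetric_on (Suc n) A" "pos_def (Suc n) A"
  shows "pos_def n (schur_complement A)"
  unfolding pos_def_def
proof (intro allI impI)
  fix v :: "nat \<Rightarrow> real" assume "\<exists>i<n. v i \<noteq> 0"
  define w where "w = (\<lambda>k. if k = 0 then - (\<Sum>j<n. A 0 (Suc j) * v j) / A 0 0 else v (k - 1))"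
  have "\<exists>i<Suc n. w i \<noteq> 0" using \<open>\<exists>i<n. v i \<noteq> 0\<close> by (auto simp: w_def)
  then have "0 < quad_form (Suc n) A w" using assms(2) unfolding pos_def_def by blast
  then show "0 < quad_form n (schur_complement A) v"
    unfolding quad_form_schur_complement[OF assms(1)] w_def .
qed

lemma ldl_extend:
  assumes sym: "symmetric_on (Suc n) A"
    and row0: "A 0 0 = 0 \<Longrightarrow> \<forall>j<Suc n. A 0 j = 0"
    and S: "\<forall>i<n. \<forall>j<n. schur_complement A i j = (\<Sum>k<n. B i k * \<delta> k * B j k)"
  defines "B' \<equiv> \<lambda>i k. if k = 0 then (if i = 0 then 1 else A i 0 / A 0 0)
                       else if i = 0 then 0 else B (i - 1) (k - 1)"
    and "\<delta>' \<equiv> \<lambda>k. if k = 0 then A 0 0 else \<delta> (k - 1)"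
  assumes ij: "i < Suc n" "j < Suc n"
  shows "A i j = (\<Sum>k<Suc n. B' i k * \<delta>' k * B' j k)"
proof -
  have symA: "A k l = A l k" if "k < Suc n" "l < Suc n" for k l
    using sym that unfolding symmetric_on_def by blast
  have split: "(\<Sum>k<Suc n. B' i k * \<delta>' k * B' j k)
      = B' i 0 * A 0 0 * B' j 0 + (\<Sum>k<n. B' i (Suc k) * \<delta> k * B' j (Suc k))"
    by (simp only: sum.lessThan_Suc_shift) (simp add: \<delta>'_def)
  consider "i = 0" | "j = 0" | i' j' where "i = Suc i'" "j = Suc j'"
    using not0_implies_Suc by blast
  then show ?thesis
  proof cases
    case 1
    then show ?thesis unfolding split using row0 ij symA[of 0 j] by (auto simp: B'_def)
  next
    case 2
    then show ?thesis unfolding split using row0 ij symA[of 0 i] by (auto simp: B'_def)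
  next
    case 3
    have "B' i 0 * A 0 0 * B' j 0 = A i 0 * A 0 j / A 0 0"
      using 3 symA[of 0 j] ij by (cases "A 0 0 = 0") (auto simp: B'_def)
    moreover have "(\<Sum>k<n. B' i (Suc k) * \<delta> k * B' j (Suc k)) = A i j - A i 0 * A 0 j / A 0 0"
      using S ij unfolding 3 B'_def schur_complement_def by simp
    ultimately show ?thesis unfolding split by simp
  qed
qed

lemma ldl_decomposition:
  "symmetric_on n A \<Longrightarrow> pos_semidef n A \<Longrightarrow>
    \<exists>B \<delta>. unit_lower_triangular B \<and> (\<forall>i<n. 0 \<le> \<delta> i) \<and> (pos_def n A \<longrightarrow> (\<forall>i<n. 0 < \<delta> i))
      \<and> (\<forall>i<n. \<forall>j<n. A i j = (\<Sum>k<n. B i k * \<delta> k * B j k))"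
proof (induction n arbitrary: A)
  case 0
  show ?case
    by (intro exI[of _ "\<lambda>i k. if i = k then 1 else 0"] exI[of _ "\<lambda>_. 0"])
      (auto simp: unit_lower_triangular_def)
next
  case (Suc n)
  note sym = Suc.prems(1) and psd = Suc.prems(2)
  obtain B \<delta> where B: "unit_lower_triangular B" and \<delta>: "\<forall>i<n. 0 \<le> \<delta> i"
    and \<delta>_pos: "pos_def n (schur_complement A) \<longrightarrow> (\<forall>i<n. 0 < \<delta> i)"
    and BS: "\<forall>i<n. \<forall>j<n. schur_complement A i j = (\<Sum>k<n. B i k * \<delta> k * B j k)"
    using Suc.IH[OF symmetric_on_schur_complement[OF sym] pos_semidef_schur_complement[OF sym psd]]
    by blast
  define B' where "B' = (\<lambda>i k. if k = 0 then (if i = 0 then 1 else A i 0 / A 0 0)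
                       else if i = 0 then 0 else B (i - 1) (k - 1))"
  define \<delta>' where "\<delta>' = (\<lambda>k. if k = 0 then A 0 0 else \<delta> (k - 1))"
  have e0: "quad_form (Suc n) A (\<lambda>l. if l = 0 then 1 else 0) = A 0 0"
    using quad_form_single[of 0 "Suc n" A 1] by simp
  have "A 0 j = 0" if "A 0 0 = 0" "j < Suc n" for j
    using pos_semidef_zero_diag_imp_zero[OF psd sym _ that(2)] that(1) by simp
  then have "\<forall>i<Suc n. \<forall>j<Suc n. A i j = (\<Sum>k<Suc n. B' i k * \<delta>' k * B' j k)"
    using ldl_extend[OF sym, of B \<delta>] BS unfolding B'_def \<delta>'_def by blast
  moreover have "unit_lower_triangular B'" using B unfolding unit_lower_triangular_def B'_def by auto
  moreover have "0 \<le> A 0 0" using psd e0 unfolding pos_semidef_def by (metis (no_types))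
  then have "\<forall>i<Suc n. 0 \<le> \<delta>' i" using \<delta> by (simp add: \<delta>'_def)
  moreover have "\<forall>i<Suc n. 0 < \<delta>' i" if pd: "pos_def (Suc n) A"
  proof -
    have "0 < A 0 0"
      using pd e0 unfolding pos_def_def by (elim allE[of _ "\<lambda>l. if l = 0 then 1 else 0"]) auto
    then show ?thesis using \<delta>_pos pos_def_schur_complement[OF sym pd] by (simp add: \<delta>'_def)
  qed
  ultimately show ?case by blast
qed

lemma det_unit_lower_triangular: "unit_lower_triangular B \<Longrightarrow> det (mat_of n B) = 1"
  by (subst det_lower_triangular[of n]) (auto simp: unit_lower_triangular_def prod_list_diag_prod)

lemma det_ldl:
  assumes "unit_lower_triangular B" and "\<forall>i<n. \<forall>j<n. A i j = (\<Sum>k<n. B i k * \<delta> k * B j k)"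
  shows "det (mat_of n A) = (\<Prod>i<n. \<delta> i)"
proof -
  have eq: "mat_of n A = mat_of n B * mat_of n (\<lambda>i j. \<delta> i * B j i)"
    unfolding mat_of_mult by (rule eq_matI) (auto simp: assms(2) mat_of_def mult.assoc)
  have "det (mat_of n B) = 1" by (rule det_unit_lower_triangular[OF assms(1)])
  moreover have "det (mat_of n (\<lambda>i j. \<delta> i * B j i)) = (\<Prod>i<n. \<delta> i)"
    by (subst det_upper_triangular[of _ n]) (use assms(1) in
        \<open>auto simp: unit_lower_triangular_def prod_list_diag_prod upper_triangular_def atLeast0LessThan\<close>)
  ultimately show ?thesis unfolding eq by (simp add: det_mult[of _ n])
qed

lemma hadamard_inequality:
  assumes "symmetric_on n A" "pos_semidef n A"
  shows "det (mat_of n A) \<le> (\<Prod>i<n. A i i)"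
proof -
  obtain B \<delta> where B: "unit_lower_triangular B" and \<delta>: "\<forall>i<n. 0 \<le> \<delta> i"
    and A: "\<forall>i<n. \<forall>j<n. A i j = (\<Sum>k<n. B i k * \<delta> k * B j k)"
    using ldl_decomposition[OF assms] by blast
  have "det (mat_of n A) = (\<Prod>i<n. \<delta> i)" by (rule det_ldl[OF B A])
  also have "\<dots> \<le> (\<Prod>i<n. A i i)"
  proof (rule prod_mono)
    fix i assume i: "i \<in> {..<n}"
    have "\<delta> i = B i i * \<delta> i * B i i" using B by (simp add: unit_lower_triangular_def)
    also have "\<dots> \<le> (\<Sum>k<n. B i k * \<delta> k * B i k)"
      by (rule member_le_sum[where f = "\<lambda>k. B i k * \<delta> k * B i k"])
        (use i \<delta> in \<open>auto simp: mult.commute mult.left_commute\<close>)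
    finally show "0 \<le> \<delta> i \<and> \<delta> i \<le> A i i" using A i \<delta> by auto
  qed
  finally show ?thesis .
qed

lemma quad_form_ldl:
  "quad_form n (\<lambda>i j. \<Sum>m<n. B i m * \<delta> m * B j m) u = (\<Sum>m<n. \<delta> m * (\<Sum>i<n. B i m * u i)\<^sup>2)"
proof -
  have "quad_form n (\<lambda>i j. \<Sum>m<n. B i m * \<delta> m * B j m) u
      = (\<Sum>i<n. \<Sum>j<n. \<Sum>m<n. \<delta> m * (B i m * u i) * (B j m * u j))"
    unfolding quad_form_def by (simp add: sum_distrib_left sum_distrib_right algebra_simps)
  also have "\<dots> = (\<Sum>i<n. \<Sum>m<n. \<Sum>j<n. \<delta> m * (B i m * u i) * (B j m * u j))"
    by (rule sum.cong[OF refl], rule sum.swap)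
  also have "\<dots> = (\<Sum>m<n. \<Sum>i<n. \<Sum>j<n. \<delta> m * (B i m * u i) * (B j m * u j))"
    by (rule sum.swap)
  also have "\<dots> = (\<Sum>m<n. \<delta> m * (\<Sum>i<n. B i m * u i)\<^sup>2)"
    by (simp add: power2_eq_square sum_distrib_left sum_distrib_right algebra_simps)
  finally show ?thesis .
qed

definition mat_congr :: "nat \<Rightarrow> (nat \<Rightarrow> nat \<Rightarrow> real) \<Rightarrow> (nat \<Rightarrow> nat \<Rightarrow> real) \<Rightarrow> nat \<Rightarrow> nat \<Rightarrow> real" where
  "mat_congr n C X i j = (\<Sum>k<n. \<Sum>l<n. C i k * X k l * C j l)"

lemma mat_of_mat_congr: "mat_of n (mat_congr n C X) = mat_of n C * mat_of n X * transpose_mat (mat_of n C)"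
proof -
  have "transpose_mat (mat_of n C) = mat_of n (\<lambda>i j. C j i)" by (rule eq_matI) auto
  then have "mat_of n C * mat_of n X * transpose_mat (mat_of n C)
      = mat_of n (\<lambda>i j. \<Sum>l<n. (\<Sum>k<n. C i k * X k l) * C j l)"
    by (simp only: mat_of_mult)
  also have "(\<lambda>i j. \<Sum>l<n. (\<Sum>k<n. C i k * X k l) * C j l) = mat_congr n C X"
    unfolding mat_congr_def by (intro ext) (simp add: sum_distrib_right, rule sum.swap)
  finally show ?thesis by simp
qed

lemma det_mat_congr: "det (mat_of n (mat_congr n C X)) = (det (mat_of n C))\<^sup>2 * det (mat_of n X)"
proof -
  have "det (mat_of n C * mat_of n X * transpose_mat (mat_of n C))
      = det (mat_of n C * mat_of n X) * det (transpose_mat (mat_of n C))"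
    by (rule det_mult[of _ n]) auto
  then show ?thesis
    unfolding mat_of_mat_congr by (simp add: det_mult[of _ n] det_transpose[of _ n] power2_eq_square)
qed

lemma quad_form_mat_congr: "quad_form n (mat_congr n C X) v = quad_form n X (\<lambda>k. \<Sum>i<n. v i * C i k)"
proof -
  have "quad_form n (mat_congr n C X) v
      = (\<Sum>i<n. \<Sum>j<n. \<Sum>k<n. \<Sum>l<n. (v i * C i k) * X k l * (v j * C j l))"
    unfolding quad_form_def mat_congr_def by (simp add: sum_distrib_left sum_distrib_right algebra_simps)
  also have "\<dots> = (\<Sum>i<n. \<Sum>k<n. \<Sum>j<n. \<Sum>l<n. (v i * C i k) * X k l * (v j * C j l))"
    by (rule sum.cong[OF refl], rule sum.swap)
  also have "\<dots> = (\<Sum>k<n. \<Sum>i<n. \<Sum>l<n. \<Sum>j<n. (v i * C i k) * X k l * (v j * C j l))"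
    by (subst sum.swap) (rule sum.cong[OF refl], rule sum.cong[OF refl], rule sum.swap)
  also have "\<dots> = (\<Sum>k<n. \<Sum>l<n. \<Sum>i<n. \<Sum>j<n. (v i * C i k) * X k l * (v j * C j l))"
    by (rule sum.cong[OF refl], rule sum.swap)
  also have "\<dots> = quad_form n X (\<lambda>k. \<Sum>i<n. v i * C i k)"
    unfolding quad_form_def by (simp add: sum_distrib_left sum_distrib_right algebra_simps)
  finally show ?thesis .
qed

lemma symmetric_on_mat_congr: "symmetric_on n X \<Longrightarrow> symmetric_on n (mat_congr n C X)"
  unfolding symmetric_on_def mat_congr_def
  by (subst sum.swap) (auto intro!: sum.cong simp: mult.commute)

lemma pos_semidef_mat_congr: "pos_semidef n X \<Longrightarrow> pos_semidef n (mat_congr n C X)"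
  unfolding pos_semidef_def quad_form_mat_congr by blast

lemma mat_congr_diag: "mat_congr n C X i i = quad_form n X (C i)"
  unfolding mat_congr_def quad_form_def by simp

lemma unit_lower_triangular_left_inverse:
  assumes "unit_lower_triangular B"
  obtains C where "det (mat_of n C) = 1"
    and "\<And>i m. i < n \<Longrightarrow> m < n \<Longrightarrow> (\<Sum>j<n. C i j * B j m) = (if i = m then 1 else 0)"
proof -
  have dB: "det (mat_of n B) = 1" by (rule det_unit_lower_triangular[OF assms])
  then have "mat_of n B \<in> Units (ring_mat TYPE(real) n ())"
    by (intro det_non_zero_imp_unit) auto
  then obtain Cm where Cm: "Cm \<in> carrier_mat n n" "Cm * mat_of n B = 1\<^sub>m n"
    unfolding Units_def ring_mat_def by auto
  define C where "C = (\<lambda>i j. Cm $$ (i, j))"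
  have Cm_eq: "Cm = mat_of n C" using Cm(1) by (intro eq_matI) (auto simp: C_def)
  show ?thesis
  proof
    have "det (mat_of n C * mat_of n B) = 1" using Cm Cm_eq by simp
    then show "det (mat_of n C) = 1" using dB by (simp add: det_mult[of _ n])
    fix i m assume "i < n" "m < n"
    moreover have "(mat_of n C * mat_of n B) $$ (i, m) = (1\<^sub>m n) $$ (i, m)" using Cm(2) Cm_eq by simp
    ultimately show "(\<Sum>j<n. C i j * B j m) = (if i = m then 1 else 0)" unfolding mat_of_mult by simp
  qed
qed

text \<open>With \<open>Y = B \<Delta> B\<^sup>T\<close> and \<open>C = B\<^sup>-\<^sup>1\<close>, the left-hand side is \<open>g\<^sup>T Y\<^sup>-\<^sup>1 g\<close>, the value of
  \<open>2 g\<^sup>T u - u\<^sup>T Y u\<close> at its maximiser \<open>u = Y\<^sup>-\<^sup>1 g = C\<^sup>T \<Delta>\<^sup>-\<^sup>1 C g\<close>.\<close>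

lemma ldl_dual_bound:
  assumes Y: "\<forall>i<n. \<forall>j<n. Y i j = (\<Sum>k<n. B i k * \<delta> k * B j k)" and \<delta>: "\<forall>i<n. 0 < \<delta> i"
    and CB: "\<And>i m. i < n \<Longrightarrow> m < n \<Longrightarrow> (\<Sum>j<n. C i j * B j m) = (if i = m then 1 else 0)"
    and \<tau>: "\<forall>u. 2 * (\<Sum>i<n. g i * u i) - quad_form n Y u \<le> \<tau>"
  shows "(\<Sum>i<n. (\<Sum>l<n. g l * C i l)\<^sup>2 / \<delta> i) \<le> \<tau>"
proof -
  define G where "G = (\<lambda>i. \<Sum>l<n. g l * C i l)"
  define u where "u = (\<lambda>l. \<Sum>i<n. C i l * G i / \<delta> i)"
  have gu: "(\<Sum>l<n. g l * u l) = (\<Sum>i<n. (G i)\<^sup>2 / \<delta> i)"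
  proof -
    have "(\<Sum>l<n. g l * u l) = (\<Sum>l<n. \<Sum>i<n. g l * C i l * G i / \<delta> i)"
      unfolding u_def by (simp add: sum_distrib_left mult.assoc)
    also have "\<dots> = (\<Sum>i<n. \<Sum>l<n. g l * C i l * G i / \<delta> i)"
      by (rule sum.swap)
    also have "\<dots> = (\<Sum>i<n. (G i)\<^sup>2 / \<delta> i)"
      unfolding G_def by (simp add: power2_eq_square sum_distrib_right sum_divide_distrib)
    finally show ?thesis .
  qed
  have Bu: "(\<Sum>i<n. B i m * u i) = G m / \<delta> m" if m: "m < n" for m
  proof -
    have "(\<Sum>i<n. B i m * u i) = (\<Sum>i<n. \<Sum>j<n. C j i * B i m * (G j / \<delta> j))"
      unfolding u_def by (simp add: sum_distrib_left algebra_simps)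
    also have "\<dots> = (\<Sum>j<n. (\<Sum>i<n. C j i * B i m) * (G j / \<delta> j))"
      by (subst sum.swap) (simp only: sum_distrib_right)
    also have "\<dots> = (\<Sum>j<n. if j = m then G j / \<delta> j else 0)"
      using CB m by (intro sum.cong) auto
    finally show ?thesis using m by simp
  qed
  have "quad_form n Y u = quad_form n (\<lambda>i j. \<Sum>m<n. B i m * \<delta> m * B j m) u"
    unfolding quad_form_def using Y by (intro sum.cong refl) auto
  also have "\<dots> = (\<Sum>m<n. (G m)\<^sup>2 / \<delta> m)"
    unfolding quad_form_ldl using Bu \<delta> by (intro sum.cong refl) (auto simp: power2_eq_square field_simps)
  finally have "quad_form n Y u = (\<Sum>m<n. (G m)\<^sup>2 / \<delta> m)" .
  moreover have "2 * (\<Sum>l<n. g l * u l) - quad_form n Y u \<le> \<tau>" using \<tau> by blast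
  ultimately show ?thesis using gu unfolding G_def by simp
qed

lemma prod_le_1_of_sum_le_card:
  fixes y :: "nat \<Rightarrow> real"
  assumes "\<forall>i<n. 0 \<le> y i" "(\<Sum>i<n. y i) \<le> real n"
  shows "(\<Prod>i<n. y i) \<le> 1"
proof -
  have "(\<Prod>i<n. y i) \<le> (\<Prod>i<n. exp (y i - 1))"
    by (rule prod_mono) (use assms in \<open>auto simp: exp_ge_add_one_self[of "y _ - 1", simplified]\<close>)
  also have "\<dots> = exp (\<Sum>i<n. y i - 1)" by (simp add: exp_sum)
  also have "\<dots> = exp ((\<Sum>i<n. y i) - real n)" by (simp add: sum_subtractf)
  also have "\<dots> \<le> 1" using assms by simp
  finally show ?thesis .
qed

text \<open>If \<open>X\<close> is dominated by \<open>\<Sum>\<^sub>k \<nu>\<^sub>k g\<^sub>k g\<^sub>k\<^sup>T\<close> and \<open>\<tau>\<^sub>k \<ge> g\<^sub>k\<^sup>T Y\<^sup>-\<^sup>1 g\<^sub>k\<close>, then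
  \<open>\<Sum>\<^sub>k \<nu>\<^sub>k \<tau>\<^sub>k \<ge> tr (Y\<^sup>-\<^sup>1 X)\<close>, and \<open>tr (Y\<^sup>-\<^sup>1 X) \<le> n\<close> gives \<open>det X \<le> det Y\<close> by Hadamard's inequality
  for \<open>B\<^sup>-\<^sup>1 X B\<^sup>-\<^sup>T\<close> and AM-GM.\<close>

lemma det_le_det_of_trace_bound:
  fixes K :: "'k set" and \<nu> \<tau> :: "'k \<Rightarrow> real" and g :: "'k \<Rightarrow> nat \<Rightarrow> real"
  assumes sym_X: "symmetric_on n X" and psd_X: "pos_semidef n X"
    and sym_Y: "symmetric_on n Y" and pd_Y: "pos_def n Y"
    and K: "finite K" and \<nu>: "\<forall>k\<in>K. 0 \<le> \<nu> k"
    and X_le: "\<forall>v. quad_form n X v \<le> (\<Sum>k\<in>K. \<nu> k * (\<Sum>i<n. g k i * v i)\<^sup>2)"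
    and \<tau>: "\<forall>k\<in>K. \<forall>u. 2 * (\<Sum>i<n. g k i * u i) - quad_form n Y u \<le> \<tau> k"
    and trace: "(\<Sum>k\<in>K. \<nu> k * \<tau> k) \<le> real n"
  shows "det (mat_of n X) \<le> det (mat_of n Y) \<and> 0 < det (mat_of n Y)"
proof -
  obtain B \<delta> where B: "unit_lower_triangular B" and \<delta>: "\<forall>i<n. 0 < \<delta> i"
    and Y: "\<forall>i<n. \<forall>j<n. Y i j = (\<Sum>k<n. B i k * \<delta> k * B j k)"
    using ldl_decomposition[OF sym_Y pos_def_imp_pos_semidef[OF pd_Y]] pd_Y by blast
  obtain C where det_C: "det (mat_of n C) = 1"
    and CB: "\<And>i m. i < n \<Longrightarrow> m < n \<Longrightarrow> (\<Sum>j<n. C i j * B j m) = (if i = m then 1 else 0)"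
    using unit_lower_triangular_left_inverse[OF B] by blast
  define Z where "Z = mat_congr n C X"
  define y where "y = (\<lambda>i. Z i i / \<delta> i)"
  have det_Y: "det (mat_of n Y) = (\<Prod>i<n. \<delta> i)" by (rule det_ldl[OF B Y])
  have det_Z: "det (mat_of n Z) = det (mat_of n X)" unfolding Z_def det_mat_congr det_C by simp
  have "det (mat_of n Z) \<le> (\<Prod>i<n. Z i i)"
    unfolding Z_def by (intro hadamard_inequality symmetric_on_mat_congr pos_semidef_mat_congr sym_X psd_X)
  also have "\<dots> = (\<Prod>i<n. \<delta> i) * (\<Prod>i<n. y i)"
    unfolding y_def prod.distrib[symmetric] using \<delta> by (intro prod.cong) auto
  also have "\<dots> \<le> (\<Prod>i<n. \<delta> i)"
  proof (rule mult_left_le)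
    have y_nonneg: "\<forall>i<n. 0 \<le> y i"
      using psd_X \<delta> unfolding y_def Z_def mat_congr_diag pos_semidef_def by (simp add: less_imp_le)
    have "(\<Sum>i<n. y i) \<le> (\<Sum>i<n. \<Sum>k\<in>K. \<nu> k * (\<Sum>l<n. g k l * C i l)\<^sup>2 / \<delta> i)"
      unfolding y_def Z_def mat_congr_diag sum_divide_distrib[symmetric] using X_le \<delta>
      by (intro sum_mono divide_right_mono) (auto simp: less_imp_le)
    also have "\<dots> = (\<Sum>k\<in>K. \<nu> k * (\<Sum>i<n. (\<Sum>l<n. g k l * C i l)\<^sup>2 / \<delta> i))"
      by (subst sum.swap) (simp add: sum_distrib_left)
    also have "\<dots> \<le> (\<Sum>k\<in>K. \<nu> k * \<tau> k)"
      using ldl_dual_bound[OF Y \<delta> CB] \<tau> \<nu> by (intro sum_mono mult_left_mono) auto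
    finally show "(\<Prod>i<n. y i) \<le> 1"
      using prod_le_1_of_sum_le_card[OF y_nonneg] trace by linarith
    show "0 \<le> (\<Prod>i<n. \<delta> i)" using \<delta> by (intro prod_nonneg) (auto simp: less_imp_le)
  qed
  finally have "det (mat_of n X) \<le> det (mat_of n Y)" using det_Z det_Y by simp
  moreover have "0 < det (mat_of n Y)" unfolding det_Y using \<delta> by (intro prod_pos) auto
  ultimately show ?thesis by blast
qed

section \<open>The Poisson--Gamma information matrix\<close>

text \<open>For the Poisson information matrix \<open>M = \<Sum>\<^sub>x \<nu>\<^sub>x F\<^sub>x F\<^sub>x\<^sup>T\<close>, this is
  \<open>M - M e\<^sub>1 e\<^sub>1\<^sup>T M / (e\<^sub>1\<^sup>T M e\<^sub>1 + c)\<close>; with \<open>c = b/m\<close> it is \<open>M_PG\<close> up to the factor \<open>a/b\<close>.\<close>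

definition info_mat :: "'a set \<Rightarrow> ('a \<Rightarrow> real) \<Rightarrow> ('a \<Rightarrow> nat \<Rightarrow> real) \<Rightarrow> real \<Rightarrow> nat \<Rightarrow> nat \<Rightarrow> real" where
  "info_mat S \<nu> F c i j = (\<Sum>x\<in>S. \<nu> x * F x i * F x j)
     - (\<Sum>x\<in>S. \<nu> x * F x i * F x 0) * (\<Sum>x\<in>S. \<nu> x * F x 0 * F x j) / ((\<Sum>x\<in>S. \<nu> x * F x 0 * F x 0) + c)"

lemma symmetric_on_info_mat: "symmetric_on n (info_mat S \<nu> F c)"
  unfolding symmetric_on_def info_mat_def by (auto simp: mult_ac)

lemma info_mat_reindex:
  "inj_on h A \<Longrightarrow> info_mat (h ` A) \<nu> F c = info_mat A (\<lambda>l. \<nu> (h l)) (\<lambda>l. F (h l)) c"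
  unfolding info_mat_def[abs_def] by (simp add: sum.reindex)

lemma quad_form_info_mat:
  assumes F0: "\<forall>x\<in>S. F x 0 = 1"
  shows "quad_form n (info_mat S \<nu> F c) v = (\<Sum>x\<in>S. \<nu> x * (\<Sum>i<n. F x i * v i)\<^sup>2)
           - (\<Sum>x\<in>S. \<nu> x * (\<Sum>i<n. F x i * v i))\<^sup>2 / ((\<Sum>x\<in>S. \<nu> x) + c)"
proof -
  define t where "t x = (\<Sum>i<n. F x i * v i)" for x
  define T where "T = (\<Sum>x\<in>S. \<nu> x * t x)"
  have F0': "(\<Sum>x\<in>S. \<nu> x * F x i * F x 0) = (\<Sum>x\<in>S. \<nu> x * F x i)"
    "(\<Sum>x\<in>S. \<nu> x * F x 0 * F x i) = (\<Sum>x\<in>S. \<nu> x * F x i)"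
    "(\<Sum>x\<in>S. \<nu> x * F x 0) = (\<Sum>x\<in>S. \<nu> x)" for i
    using F0 by (auto intro: sum.cong)
  have lin: "(\<Sum>i<n. v i * (\<Sum>x\<in>S. \<nu> x * F x i)) = T"
  proof -
    have "(\<Sum>i<n. v i * (\<Sum>x\<in>S. \<nu> x * F x i)) = (\<Sum>i<n. \<Sum>x\<in>S. \<nu> x * (F x i * v i))"
      by (auto simp: sum_distrib_left intro!: sum.cong)
    also have "\<dots> = T" unfolding T_def t_def by (subst sum.swap) (simp add: sum_distrib_left)
    finally show ?thesis .
  qed
  have quad: "(\<Sum>i<n. \<Sum>j<n. v i * (\<Sum>x\<in>S. \<nu> x * F x i * F x j) * v j) = (\<Sum>x\<in>S. \<nu> x * (t x)\<^sup>2)"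
  proof -
    have "(\<Sum>i<n. \<Sum>j<n. v i * (\<Sum>x\<in>S. \<nu> x * F x i * F x j) * v j)
        = (\<Sum>i<n. \<Sum>j<n. \<Sum>x\<in>S. \<nu> x * (F x i * v i) * (F x j * v j))"
      by (simp add: sum_distrib_left sum_distrib_right algebra_simps)
    also have "\<dots> = (\<Sum>i<n. \<Sum>x\<in>S. \<Sum>j<n. \<nu> x * (F x i * v i) * (F x j * v j))"
      by (rule sum.cong[OF refl], rule sum.swap)
    also have "\<dots> = (\<Sum>x\<in>S. \<Sum>i<n. \<Sum>j<n. \<nu> x * (F x i * v i) * (F x j * v j))"
      by (rule sum.swap)
    also have "\<dots> = (\<Sum>x\<in>S. \<nu> x * (t x)\<^sup>2)"
      unfolding t_def by (simp add: power2_eq_square sum_distrib_left sum_distrib_right algebra_simps)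
    finally show ?thesis .
  qed
  have "quad_form n (info_mat S \<nu> F c) v
      = (\<Sum>i<n. \<Sum>j<n. v i * (\<Sum>x\<in>S. \<nu> x * F x i * F x j) * v j)
        - (\<Sum>i<n. \<Sum>j<n. (v i * (\<Sum>x\<in>S. \<nu> x * F x i)) * (v j * (\<Sum>x\<in>S. \<nu> x * F x j))
             / ((\<Sum>x\<in>S. \<nu> x) + c))"
    unfolding quad_form_def info_mat_def F0' by (simp add: sum_subtractf algebra_simps)
  also have "\<dots> = (\<Sum>x\<in>S. \<nu> x * (t x)\<^sup>2) - T * T / ((\<Sum>x\<in>S. \<nu> x) + c)"
    unfolding quad by (simp only: sum_product[symmetric] sum_divide_distrib[symmetric] lin)
  finally show ?thesis unfolding t_def T_def by (simp add: power2_eq_square)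
qed

text \<open>Completing the square in an auxiliary variable \<open>\<alpha>\<close> (the intercept direction).\<close>

lemma quad_form_info_mat_shift:
  assumes F0: "\<forall>x\<in>S. F x 0 = 1" and N: "(\<Sum>x\<in>S. \<nu> x) + c \<noteq> 0"
  shows "quad_form n (info_mat S \<nu> F c) v
    = (\<Sum>x\<in>S. \<nu> x * ((\<Sum>i<n. F x i * v i) + \<alpha>)\<^sup>2) + c * \<alpha>\<^sup>2
      - ((\<Sum>x\<in>S. \<nu> x) + c) * (\<alpha> + (\<Sum>x\<in>S. \<nu> x * (\<Sum>i<n. F x i * v i)) / ((\<Sum>x\<in>S. \<nu> x) + c))\<^sup>2"
proof -
  define t where "t x = (\<Sum>i<n. F x i * v i)" for x
  define K where "K = (\<Sum>x\<in>S. \<nu> x) + c"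
  define T where "T = (\<Sum>x\<in>S. \<nu> x * t x)"
  have K: "K \<noteq> 0" using N by (simp add: K_def)
  have "quad_form n (info_mat S \<nu> F c) v = (\<Sum>x\<in>S. \<nu> x * (t x)\<^sup>2) - T\<^sup>2 / K"
    using quad_form_info_mat[of S F n \<nu> c v, OF F0] unfolding t_def T_def K_def .
  moreover have "(\<Sum>x\<in>S. \<nu> x * (t x + \<alpha>)\<^sup>2)
      = (\<Sum>x\<in>S. \<nu> x * (t x)\<^sup>2) + 2 * \<alpha> * T + \<alpha>\<^sup>2 * (\<Sum>x\<in>S. \<nu> x)"
    unfolding T_def by (simp add: power2_eq_square algebra_simps sum.distrib sum_distrib_left)
  moreover have "K * (\<alpha> + T / K)\<^sup>2 = K * \<alpha>\<^sup>2 + 2 * \<alpha> * T + T\<^sup>2 / K"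
    using K by (simp add: power2_eq_square field_simps)
  ultimately show ?thesis
    unfolding t_def[symmetric] T_def[symmetric] K_def[symmetric] by (simp add: K_def algebra_simps)
qed

lemma quad_form_info_mat_le:
  assumes "\<forall>x\<in>S. F x 0 = 1" and "(\<Sum>x\<in>S. \<nu> x) + c > 0"
  shows "quad_form n (info_mat S \<nu> F c) v \<le> (\<Sum>x\<in>S. \<nu> x * ((\<Sum>i<n. F x i * v i) + \<alpha>)\<^sup>2) + c * \<alpha>\<^sup>2"
  using quad_form_info_mat_shift[of S F \<nu> c n v \<alpha>] assms by simp

lemma quad_form_info_mat_min:
  fixes n :: nat and v :: "nat \<Rightarrow> real"
  assumes "\<forall>x\<in>S. F x 0 = 1" and "(\<Sum>x\<in>S. \<nu> x) + c \<noteq> 0"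
  defines "\<alpha> \<equiv> - (\<Sum>x\<in>S. \<nu> x * (\<Sum>i<n. F x i * v i)) / ((\<Sum>x\<in>S. \<nu> x) + c)"
  shows "quad_form n (info_mat S \<nu> F c) v = (\<Sum>x\<in>S. \<nu> x * ((\<Sum>i<n. F x i * v i) + \<alpha>)\<^sup>2) + c * \<alpha>\<^sup>2"
  using quad_form_info_mat_shift[of S F \<nu> c n v \<alpha>] assms by simp

lemma pos_semidef_info_mat:
  assumes "\<forall>x\<in>S. F x 0 = 1" "\<forall>x\<in>S. 0 \<le> \<nu> x" "c > 0"
  shows "pos_semidef n (info_mat S \<nu> F c)"
  unfolding pos_semidef_def
proof
  fix v
  have N: "(\<Sum>x\<in>S. \<nu> x) + c \<noteq> 0" using assms(2,3) by (smt (verit) sum_nonneg)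
  show "0 \<le> quad_form n (info_mat S \<nu> F c) v"
    unfolding quad_form_info_mat_min[where S = S and F = F and \<nu> = \<nu> and c = c, OF assms(1) N] using assms(2,3)
    by (intro add_nonneg_nonneg sum_nonneg mult_nonneg_nonneg) auto
qed

lemma pos_def_info_mat:
  assumes F0: "\<forall>x\<in>S. F x 0 = 1" and \<nu>: "\<forall>x\<in>S. 0 < \<nu> x" and c: "c > 0" and "finite S"
    and indep: "\<And>v. \<forall>x\<in>S. (\<Sum>i<n. F x i * v i) = 0 \<Longrightarrow> \<forall>i<n. v i = 0"
  shows "pos_def n (info_mat S \<nu> F c)"
  unfolding pos_def_def
proof (intro allI impI)
  fix v :: "nat \<Rightarrow> real" assume nz: "\<exists>i<n. v i \<noteq> 0"
  have "(\<Sum>x\<in>S. \<nu> x) + c \<noteq> 0" using \<nu> c by (smt (verit) sum_nonneg)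
  note qf = quad_form_info_mat_min[where S = S and F = F and \<nu> = \<nu> and c = c and n = n and v = v, OF F0 this]
  define \<alpha> where "\<alpha> = - (\<Sum>x\<in>S. \<nu> x * (\<Sum>i<n. F x i * v i)) / ((\<Sum>x\<in>S. \<nu> x) + c)"
  define A where "A = (\<Sum>x\<in>S. \<nu> x * ((\<Sum>i<n. F x i * v i) + \<alpha>)\<^sup>2)"
  have A: "0 \<le> A" unfolding A_def using \<nu> by (intro sum_nonneg) (simp add: less_imp_le)
  show "0 < quad_form n (info_mat S \<nu> F c) v"
  proof (rule ccontr)
    assume "\<not> ?thesis"
    then have "A + c * \<alpha>\<^sup>2 \<le> 0" using qf unfolding A_def \<alpha>_def by simp
    moreover have "0 \<le> c * \<alpha>\<^sup>2" using c by simp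
    ultimately have "A = 0" and "c * \<alpha>\<^sup>2 = 0" using A by linarith+
    then have "A = 0" and "\<alpha> = 0" using c by simp_all
    then have "\<forall>x\<in>S. (\<Sum>i<n. F x i * v i) = 0"
      using \<nu> \<open>finite S\<close> unfolding A_def
      by (subst (asm) sum_nonneg_eq_0_iff) (auto simp: less_imp_le dest!: bspec)
    then show False using indep nz by blast
  qed
qed

text \<open>The right-hand side bounds \<open>g\<^sup>T Y\<^sup>-\<^sup>1 g\<close> for \<open>g = \<Sum>\<^sub>x a\<^sub>x F\<^sub>x\<close> and \<open>Y = info_mat S \<nu> F c\<close>,
  without inverting \<open>Y\<close>.\<close>

lemma info_mat_dual_bound:
  assumes F0: "\<forall>x\<in>S. F x 0 = 1" and \<nu>: "\<forall>x\<in>S. 0 < \<nu> x" and c: "c > 0"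
    and g: "\<forall>i<n. g i = (\<Sum>x\<in>S. a x * F x i)"
  shows "2 * (\<Sum>i<n. g i * u i) - quad_form n (info_mat S \<nu> F c) u
    \<le> (\<Sum>x\<in>S. (a x)\<^sup>2 / \<nu> x) + (\<Sum>x\<in>S. a x)\<^sup>2 / c"
proof -
  have N: "(\<Sum>x\<in>S. \<nu> x) + c \<noteq> 0" using \<nu> c by (smt (verit) sum_nonneg)
  define t where "t x = (\<Sum>i<n. F x i * u i)" for x
  define \<alpha> where "\<alpha> = - (\<Sum>x\<in>S. \<nu> x * t x) / ((\<Sum>x\<in>S. \<nu> x) + c)"
  have qf: "quad_form n (info_mat S \<nu> F c) u = (\<Sum>x\<in>S. \<nu> x * (t x + \<alpha>)\<^sup>2) + c * \<alpha>\<^sup>2"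
    unfolding \<alpha>_def t_def by (rule quad_form_info_mat_min[where F = F and \<nu> = \<nu> and c = c, OF F0 N])
  have am_gm: "2 * a * y - \<nu> * y\<^sup>2 \<le> a\<^sup>2 / \<nu>" if "\<nu> > 0" for a y \<nu> :: real
  proof -
    have "0 \<le> \<nu> * (y - a / \<nu>)\<^sup>2" using that by simp
    also have "\<dots> = \<nu> * y\<^sup>2 - 2 * a * y + a\<^sup>2 / \<nu>" using that by (simp add: power2_eq_square field_simps)
    finally show ?thesis by simp
  qed
  have "(\<Sum>i<n. g i * u i) = (\<Sum>i<n. \<Sum>x\<in>S. a x * (F x i * u i))"
    using g by (auto simp: sum_distrib_right sum_distrib_left mult_ac intro!: sum.cong)
  also have "\<dots> = (\<Sum>x\<in>S. a x * t x)" unfolding t_def by (subst sum.swap) (simp add: sum_distrib_left)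
  finally have gu: "(\<Sum>i<n. g i * u i) = (\<Sum>x\<in>S. a x * (t x + \<alpha>)) - \<alpha> * (\<Sum>x\<in>S. a x)"
    by (simp add: algebra_simps sum.distrib sum_distrib_left sum_distrib_right)
  have "2 * (\<Sum>i<n. g i * u i) - quad_form n (info_mat S \<nu> F c) u
      = (\<Sum>x\<in>S. 2 * a x * (t x + \<alpha>) - \<nu> x * (t x + \<alpha>)\<^sup>2) + (2 * (\<Sum>x\<in>S. a x) * (- \<alpha>) - c * (- \<alpha>)\<^sup>2)"
    unfolding qf gu by (simp add: sum_subtractf sum_distrib_left sum_distrib_right sum_negf algebra_simps)
  also have "\<dots> \<le> (\<Sum>x\<in>S. (a x)\<^sup>2 / \<nu> x) + (\<Sum>x\<in>S. a x)\<^sup>2 / c"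
    using \<nu> c by (intro add_mono sum_mono am_gm) auto
  finally show ?thesis .
qed

lemma e1_outer_product_sandwich:
  fixes P :: "real mat"
  assumes P: "P \<in> carrier_mat p p" and p: "0 < p"
  shows "P * mat p p (\<lambda>(i, j). unit_vec p 0 $ i * unit_vec p 0 $ j) * P
       = mat p p (\<lambda>(i, j). P $$ (i, 0) * P $$ (0, j))"
proof (rule eq_matI)
  fix i j assume "i < dim_row (mat p p (\<lambda>(i, j). P $$ (i, 0) * P $$ (0, j)))"
    "j < dim_col (mat p p (\<lambda>(i, j). P $$ (i, 0) * P $$ (0, j)))"
  then have ij: "i < p" "j < p" by auto
  have "(P * mat p p (\<lambda>(i, j). unit_vec p 0 $ i * unit_vec p 0 $ j)) $$ (i, k)
      = (if k = 0 then P $$ (i, 0) else 0)" if "k < p" for k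
    using P ij that p by (simp add: scalar_prod_def unit_vec_def if_distrib[of "(*) _"] cong: if_cong)
  then show "(P * mat p p (\<lambda>(i, j). unit_vec p 0 $ i * unit_vec p 0 $ j) * P) $$ (i, j)
      = mat p p (\<lambda>(i, j). P $$ (i, 0) * P $$ (0, j)) $$ (i, j)"
    using P ij p by (simp add: scalar_prod_def if_distrib[of "\<lambda>x. x * _"] cong: if_cong)
qed (use P in auto)

lemma M_PG_eq_info_mat:
  assumes p: "0 < p"
  shows "M_PG p a b m w \<beta>
    = (a / b) \<cdot>\<^sub>m mat_of p (info_mat (supp w) (\<lambda>x. w x * exp (fvec x \<bullet> \<beta>)) (\<lambda>x j. fvec x $ j) (b / real m))"
proof -
  define P where "P = M_Po p w \<beta>"
  have P: "P \<in> carrier_mat p p" unfolding P_def M_Po_def by simp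
  have P_index: "P $$ (i, j) = (\<Sum>x\<in>supp w. w x * exp (fvec x \<bullet> \<beta>) * fvec x $ i * fvec x $ j)"
    if "i < p" "j < p" for i j
    unfolding P_def M_Po_def using that by simp
  have "unit_vec p 0 \<bullet> (P *\<^sub>v unit_vec p 0) = (P *\<^sub>v unit_vec p 0) $ 0"
    using P p by (intro scalar_prod_left_unit) auto
  also have "\<dots> = P $$ (0, 0)"
    using P p by (simp add: scalar_prod_right_unit)
  finally have e1: "unit_vec p 0 \<bullet> (P *\<^sub>v unit_vec p 0) = P $$ (0, 0)" .
  show ?thesis
    unfolding M_PG_def Let_def P_def[symmetric] e1 e1_outer_product_sandwich[OF P p]
    by (rule eq_matI) (use P p in \<open>auto simp: P_index info_mat_def\<close>)
qed

lemma det_M_PG: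
  "0 < p \<Longrightarrow> det (M_PG p a b m w \<beta>) = (a / b) ^ p
     * det (mat_of p (info_mat (supp w) (\<lambda>x. w x * exp (fvec x \<bullet> \<beta>)) (\<lambda>x j. fvec x $ j) (b / real m)))"
  unfolding M_PG_eq_info_mat by simp

section \<open>A sufficient condition for D-optimality of a saturated design\<close>

lemma saturated_dual_bounds:
  fixes \<mu> a :: "nat \<Rightarrow> real"
  assumes \<mu>: "\<forall>l<n. 0 < \<mu> l" and c: "c > 0"
  defines "N \<equiv> \<Sum>l<n. \<mu> l"
  defines "s \<equiv> N + c"
  shows "c * ((\<Sum>l<n. (\<mu> l / s)\<^sup>2 / \<mu> l) + (\<Sum>l<n. \<mu> l / s)\<^sup>2 / c) = N / s"
    and "(\<Sum>l<n. a l) = 1 \<Longrightarrow>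
      (\<Sum>l<n. (a l - \<mu> l / s)\<^sup>2 / \<mu> l) + (\<Sum>l<n. a l - \<mu> l / s)\<^sup>2 / c = (\<Sum>l<n. (a l)\<^sup>2 / \<mu> l) - 1 / s"
proof -
  have N: "0 \<le> N" unfolding N_def using \<mu> by (intro sum_nonneg) (simp add: less_imp_le)
  then have s: "0 < s" unfolding s_def using c by simp
  have sq: "(\<Sum>l<n. (\<mu> l / s)\<^sup>2 / \<mu> l) = N / s\<^sup>2"
    unfolding N_def sum_divide_distrib using \<mu> by (intro sum.cong refl) (simp add: power2_eq_square)
  have lin: "(\<Sum>l<n. \<mu> l / s) = N / s" unfolding N_def by (simp add: sum_divide_distrib)
  show "c * ((\<Sum>l<n. (\<mu> l / s)\<^sup>2 / \<mu> l) + (\<Sum>l<n. \<mu> l / s)\<^sup>2 / c) = N / s"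
    unfolding sq lin using c s by (simp add: power2_eq_square field_simps) (simp add: s_def algebra_simps)
  assume a: "(\<Sum>l<n. a l) = 1"
  have "(a l - \<mu> l / s)\<^sup>2 / \<mu> l = (a l)\<^sup>2 / \<mu> l - 2 * a l / s + \<mu> l / s\<^sup>2" if "l < n" for l
  proof -
    have "\<mu> l \<noteq> 0" using \<mu> that by auto
    then show ?thesis using s by (simp add: power2_eq_square field_simps)
  qed
  then have "(\<Sum>l<n. (a l - \<mu> l / s)\<^sup>2 / \<mu> l) = (\<Sum>l<n. (a l)\<^sup>2 / \<mu> l - 2 * a l / s + \<mu> l / s\<^sup>2)"
    by simp
  also have "\<dots> = (\<Sum>l<n. (a l)\<^sup>2 / \<mu> l) - 2 / s + N / s\<^sup>2"
    using a unfolding N_def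
    by (simp add: sum.distrib sum_subtractf sum_divide_distrib[symmetric] sum_distrib_left[symmetric])
  moreover have "(\<Sum>l<n. a l - \<mu> l / s) = 1 - N / s"
    using a lin by (simp add: sum_subtractf)
  moreover have "- 2 / s + N / s\<^sup>2 + (1 - N / s)\<^sup>2 / c = - 1 / s"
  proof -
    have "1 - N / s = c / s" using s by (simp add: s_def field_simps)
    moreover have "N / s\<^sup>2 + c / s\<^sup>2 = 1 / s" using s by (simp add: s_def power2_eq_square add_divide_distrib[symmetric])
    ultimately show ?thesis using c by (simp add: power2_eq_square)
  qed
  ultimately show "(\<Sum>l<n. (a l - \<mu> l / s)\<^sup>2 / \<mu> l) + (\<Sum>l<n. a l - \<mu> l / s)\<^sup>2 / c
      = (\<Sum>l<n. (a l)\<^sup>2 / \<mu> l) - 1 / s"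
    by simp
qed

lemma saturated_trace_le:
  fixes w \<eta> :: "'a \<Rightarrow> real" and a :: "'a \<Rightarrow> nat \<Rightarrow> real" and \<mu> :: "nat \<Rightarrow> real"
  assumes \<mu>: "\<forall>l<n. 0 < \<mu> l" and c: "c > 0"
    and w: "\<forall>x\<in>S. 0 \<le> w x" "(\<Sum>x\<in>S. w x) = 1"
    and affine: "\<forall>x\<in>S. (\<Sum>l<n. a x l) = 1"
    and sens: "\<forall>x\<in>S. \<eta> x * ((\<Sum>l<n. (a x l)\<^sup>2 / \<mu> l) - 1 / ((\<Sum>l<n. \<mu> l) + c))
                      + (\<Sum>l<n. \<mu> l) / ((\<Sum>l<n. \<mu> l) + c) \<le> real n"
  defines "s \<equiv> (\<Sum>l<n. \<mu> l) + c"
  shows "c * ((\<Sum>l<n. (\<mu> l / s)\<^sup>2 / \<mu> l) + (\<Sum>l<n. \<mu> l / s)\<^sup>2 / c)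
      + (\<Sum>x\<in>S. w x * \<eta> x * ((\<Sum>l<n. (a x l - \<mu> l / s)\<^sup>2 / \<mu> l) + (\<Sum>l<n. a x l - \<mu> l / s)\<^sup>2 / c))
      \<le> real n"
proof -
  define N where "N = (\<Sum>l<n. \<mu> l)"
  have "w x * \<eta> x * ((\<Sum>l<n. (a x l - \<mu> l / s)\<^sup>2 / \<mu> l) + (\<Sum>l<n. a x l - \<mu> l / s)\<^sup>2 / c)
      \<le> w x * (real n - N / s)" if x: "x \<in> S" for x
  proof -
    have "\<eta> x * ((\<Sum>l<n. (a x l - \<mu> l / s)\<^sup>2 / \<mu> l) + (\<Sum>l<n. a x l - \<mu> l / s)\<^sup>2 / c) \<le> real n - N / s"
      using saturated_dual_bounds(2)[OF \<mu> c] affine sens x unfolding s_def N_def by auto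
    then show ?thesis using w x by (simp add: mult.assoc mult_left_mono)
  qed
  then have "(\<Sum>x\<in>S. w x * \<eta> x * ((\<Sum>l<n. (a x l - \<mu> l / s)\<^sup>2 / \<mu> l) + (\<Sum>l<n. a x l - \<mu> l / s)\<^sup>2 / c))
      \<le> (\<Sum>x\<in>S. w x) * (real n - N / s)"
    unfolding sum_distrib_right by (rule sum_mono)
  then show ?thesis using saturated_dual_bounds(1)[OF \<mu> c] w unfolding s_def N_def by simp
qed

lemma quad_form_info_mat_le_shifted:
  assumes "\<forall>x\<in>S. F x 0 = 1" and "(\<Sum>x\<in>S. \<nu> x) + c > 0"
  shows "quad_form n (info_mat S \<nu> F c) v
    \<le> c * (\<Sum>i<n. \<kappa> i * v i)\<^sup>2 + (\<Sum>x\<in>S. \<nu> x * (\<Sum>i<n. (F x i - \<kappa> i) * v i)\<^sup>2)"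
  using quad_form_info_mat_le[where F = F and c = c and n = n and v = v
      and \<alpha> = "- (\<Sum>i<n. \<kappa> i * v i)", OF assms]
  by (simp add: left_diff_distrib sum_subtractf)

text \<open>Kiefer--Wolfowitz type sufficient condition for a saturated design with support rows
  \<open>G\<^sub>0, \<dots>, G\<^sub>n\<^sub>-\<^sub>1\<close> and intensities \<open>\<mu>\<^sub>l\<close>: if \<open>F\<^sub>x = \<Sum>\<^sub>l a\<^sub>x\<^sub>l G\<^sub>l\<close> then \<open>\<Sum>\<^sub>l a\<^sub>x\<^sub>l\<^sup>2 / \<mu>\<^sub>l\<close> is
  \<open>F\<^sub>x\<^sup>T M\<^sub>P\<^sub>o\<^sup>-\<^sup>1 F\<^sub>x\<close>, and \<open>sens\<close> is the equivalence-theorem inequality for the Poisson--Gamma model.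
  The rank-one terms fed to \<open>det_le_det_of_trace_bound\<close> are \<open>F\<^sub>x - \<kappa>\<close> for the support points and
  \<open>\<kappa> = \<Sum>\<^sub>l \<mu>\<^sub>l G\<^sub>l / (N + c)\<close> with weight \<open>c\<close>.\<close>

lemma det_info_mat_le_saturated:
  fixes S :: "'a set" and w \<eta> :: "'a \<Rightarrow> real" and F a :: "'a \<Rightarrow> nat \<Rightarrow> real"
    and \<mu> :: "nat \<Rightarrow> real" and G :: "nat \<Rightarrow> nat \<Rightarrow> real"
  assumes S: "finite S" and c: "c > 0"
    and F0: "\<forall>x\<in>S. F x 0 = 1" and G0: "\<forall>l<n. G l 0 = 1" and \<mu>: "\<forall>l<n. 0 < \<mu> l"
    and indep: "\<And>v. \<forall>l\<in>{..<n}. (\<Sum>i<n. G l i * v i) = 0 \<Longrightarrow> \<forall>i<n. v i = 0"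
    and w: "\<forall>x\<in>S. 0 \<le> w x" "(\<Sum>x\<in>S. w x) = 1" and \<eta>: "\<forall>x\<in>S. 0 < \<eta> x"
    and coord: "\<forall>x\<in>S. \<forall>i<n. F x i = (\<Sum>l<n. a x l * G l i)"
    and affine: "\<forall>x\<in>S. (\<Sum>l<n. a x l) = 1"
    and sens: "\<forall>x\<in>S. \<eta> x * ((\<Sum>l<n. (a x l)\<^sup>2 / \<mu> l) - 1 / ((\<Sum>l<n. \<mu> l) + c))
                      + (\<Sum>l<n. \<mu> l) / ((\<Sum>l<n. \<mu> l) + c) \<le> real n"
  shows "det (mat_of n (info_mat S (\<lambda>x. w x * \<eta> x) F c)) \<le> det (mat_of n (info_mat {..<n} \<mu> G c))
    \<and> 0 < det (mat_of n (info_mat {..<n} \<mu> G c))"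
proof -
  define s where "s = (\<Sum>l<n. \<mu> l) + c"
  define \<kappa> where "\<kappa> i = (\<Sum>l<n. \<mu> l / s * G l i)" for i
  define K where "K = insert None (Some ` S)"
  define \<nu>K where "\<nu>K k = (case k of None \<Rightarrow> c | Some x \<Rightarrow> w x * \<eta> x)" for k
  define gK where "gK k = (case k of None \<Rightarrow> \<kappa> | Some x \<Rightarrow> (\<lambda>i. F x i - \<kappa> i))" for k
  define aK where "aK k = (case k of None \<Rightarrow> (\<lambda>l. \<mu> l / s) | Some x \<Rightarrow> (\<lambda>l. a x l - \<mu> l / s))" for k
  define \<tau>K where "\<tau>K k = (\<Sum>l<n. (aK k l)\<^sup>2 / \<mu> l) + (\<Sum>l<n. aK k l)\<^sup>2 / c" for k
  have \<nu>: "\<forall>x\<in>S. 0 \<le> w x * \<eta> x" using w \<eta> by (simp add: less_imp_le)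
  have sum_K: "(\<Sum>k\<in>K. f k) = f None + (\<Sum>x\<in>S. f (Some x))" for f :: "'a option \<Rightarrow> real"
    unfolding K_def using S by (simp add: sum.reindex)
  have "(\<Sum>x\<in>S. w x * \<eta> x) + c > 0" using \<nu> c by (simp add: add_nonneg_pos sum_nonneg)
  then have X_le: "\<forall>v. quad_form n (info_mat S (\<lambda>x. w x * \<eta> x) F c) v
      \<le> (\<Sum>k\<in>K. \<nu>K k * (\<Sum>i<n. gK k i * v i)\<^sup>2)"
    unfolding sum_K \<nu>K_def gK_def using quad_form_info_mat_le_shifted[where F = F, OF F0] by simp
  have \<tau>: "\<forall>k\<in>K. \<forall>u. 2 * (\<Sum>i<n. gK k i * u i) - quad_form n (info_mat {..<n} \<mu> G c) u \<le> \<tau>K k"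
  proof (intro ballI allI)
    fix k u assume k: "k \<in> K"
    have "\<forall>i<n. gK k i = (\<Sum>l\<in>{..<n}. aK k l * G l i)"
      using k coord unfolding K_def gK_def aK_def \<kappa>_def
      by (auto simp: left_diff_distrib sum_subtractf)
    then show "2 * (\<Sum>i<n. gK k i * u i) - quad_form n (info_mat {..<n} \<mu> G c) u \<le> \<tau>K k"
      unfolding \<tau>K_def using G0 \<mu> c by (intro info_mat_dual_bound) auto
  qed
  have "(\<Sum>k\<in>K. \<nu>K k * \<tau>K k) \<le> real n"
    unfolding sum_K \<nu>K_def \<tau>K_def aK_def s_def using saturated_trace_le[OF \<mu> c w affine sens] by simp
  moreover have "finite K" "\<forall>k\<in>K. 0 \<le> \<nu>K k" unfolding K_def \<nu>K_def using S \<nu> c by auto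
  moreover have "pos_def n (info_mat {..<n} \<mu> G c)"
    by (rule pos_def_info_mat) (use G0 \<mu> c indep in auto)
  moreover have "pos_semidef n (info_mat S (\<lambda>x. w x * \<eta> x) F c)"
    by (rule pos_semidef_info_mat) (use F0 \<nu> c in auto)
  ultimately show ?thesis
    using det_le_det_of_trace_bound[OF symmetric_on_info_mat _ symmetric_on_info_mat _ _ _ X_le \<tau>]
    by blast
qed

section \<open>The sensitivity function along a ray\<close>

lemma DERIV_exp_weighted_nonpos_imp_nonincreasing:
  assumes "\<And>t. (h has_real_derivative exp (- t) * f t) (at t)" "r \<le> s"
    and "\<And>t. r \<le> t \<Longrightarrow> t \<le> s \<Longrightarrow> f t \<le> 0"
  shows "h s \<le> h r"
proof (rule DERIV_nonpos_imp_nonincreasing[of r s h, OF assms(2)])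
  fix t assume "r \<le> t" "t \<le> s"
  then show "\<exists>y. DERIV h t :> y \<and> y \<le> 0"
    using assms(1,3) by (intro exI[of _ "exp (- t) * f t"]) (simp add: mult_nonneg_nonpos)
qed

lemma DERIV_exp_weighted_nonneg_imp_nondecreasing:
  assumes "\<And>t. (h has_real_derivative exp (- t) * f t) (at t)" "r \<le> s"
    and "\<And>t. r \<le> t \<Longrightarrow> t \<le> s \<Longrightarrow> 0 \<le> f t"
  shows "h r \<le> h s"
proof (rule DERIV_nonneg_imp_nondecreasing[of r s h, OF assms(2)])
  fix t assume "r \<le> t" "t \<le> s"
  then show "\<exists>y. DERIV h t :> y \<and> 0 \<le> y"
    using assms(1,3) by (intro exI[of _ "exp (- t) * f t"]) simp
qed

text \<open>If \<open>h' t = e\<^sup>-\<^sup>t (t - z) L t\<close> with \<open>L\<close> decreasing, then the equal values at \<open>0\<close> and \<open>z\<close>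
  force \<open>L z \<le> 0\<close>, so on \<open>[0, \<infinity>)\<close> the function \<open>h\<close> is largest at \<open>0\<close> and \<open>z\<close>.\<close>

lemma le_endpoints_of_deriv_sign:
  fixes h L :: "real \<Rightarrow> real"
  assumes z: "z > 0"
    and der: "\<And>t. (h has_real_derivative exp (- t) * ((t - z) * L t)) (at t)"
    and L_anti: "\<And>r s. r \<le> s \<Longrightarrow> L s \<le> L r"
    and h0: "h 0 = h z" and u: "0 \<le> u"
  shows "h u \<le> h z"
proof -
  note nonincr = DERIV_exp_weighted_nonpos_imp_nonincreasing[OF der]
  note nondecr = DERIV_exp_weighted_nonneg_imp_nondecreasing[OF der]
  have Lz: "L z \<le> 0"
  proof (rule ccontr)
    assume "\<not> L z \<le> 0"
    then have L_pos: "L t > 0" if "t \<le> z" for t using L_anti[OF that] by linarith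
    have "h (z / 2) < h 0"
    proof (rule DERIV_neg_imp_decreasing[of 0 "z / 2" h])
      show "0 < z / 2" using z by simp
    next
      fix t assume "0 \<le> t" "t \<le> z / 2"
      then have "(t - z) * L t < 0" using L_pos[of t] z by (intro mult_neg_pos) auto
      then show "\<exists>y. DERIV h t :> y \<and> y < 0"
        using der by (intro exI[of _ "exp (- t) * ((t - z) * L t)"]) (simp add: mult_pos_neg)
    qed
    moreover have "h z \<le> h (z / 2)"
      using z L_pos by (intro nonincr) (auto intro!: mult_nonpos_nonneg simp: order.strict_implies_order)
    ultimately show False using h0 by simp
  qed
  consider "z \<le> u" | "u < z" "0 \<le> L u" | "u < z" "L u < 0" by linarith
  then show ?thesis
  proof cases
    case 1
    have "(t - z) * L t \<le> 0" if "z \<le> t" for t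
      using Lz L_anti[OF that] that by (intro mult_nonneg_nonpos) auto
    then show ?thesis using 1 by (intro nonincr) auto
  next
    case 2
    have "(t - z) * L t \<le> 0" if "t \<le> u" for t
      using 2 L_anti[OF that] that by (intro mult_nonpos_nonneg) auto
    then have "h u \<le> h 0" using u by (intro nonincr) auto
    then show ?thesis using h0 by simp
  next
    case 3
    have "0 \<le> (t - z) * L t" if "u \<le> t" "t \<le> z" for t
      using 3 L_anti[OF that(1)] that by (intro mult_nonpos_nonpos) auto
    then show ?thesis using 3 by (intro nondecr) auto
  qed
qed

lemma sensitivity_profile_le:
  fixes z K0 K1 D C :: real
  assumes z: "z > 0" and K0: "K0 > 0" and K1: "K1 > 0"
    and at_0: "K0 - D + C = T" and at_z: "exp (- z) * (K1 - D) + C = T"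
    and crit: "D = K1 - 2 * K1 / z" and u: "0 \<le> u"
  shows "exp (- u) * (K0 * (1 - u / z)\<^sup>2 + K1 * u\<^sup>2 / z\<^sup>2 - D) + C \<le> T"
proof -
  define h where "h = (\<lambda>u. exp (- u) * (K0 * (1 - u / z)\<^sup>2 + K1 * u\<^sup>2 / z\<^sup>2 - D) + C)"
  define A where "A = (K0 + K1) / z\<^sup>2"
  define L where "L = (\<lambda>t. 2 * K0 / z + 2 * A - A * (t + z))"
  have "(h has_real_derivative exp (- t) * ((t - z) * L t)) (at t)" for t
    unfolding h_def
    apply (rule derivative_eq_intros refl | (use z in \<open>simp; fail\<close>))+
    unfolding crit L_def A_def using z by (simp add: field_simps power2_eq_square)
  moreover have "L s \<le> L r" if "r \<le> s" for r s
    unfolding L_def A_def using K0 K1 z that by (simp add: divide_right_mono)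
  moreover have "h 0 = T" "h z = T" using at_0 at_z z by (simp_all add: h_def)
  ultimately have "h u \<le> T" using le_endpoints_of_deriv_sign[of z h L u] z u by simp
  then show ?thesis unfolding h_def .
qed

section \<open>The optimal weights\<close>

text \<open>\<open>P\<close>, \<open>mm\<close> and \<open>t\<close> stand for \<open>p\<close>, \<open>m\<close> and the linear predictor \<open>f(d)\<^sup>T\<beta>\<close> at the corner.\<close>

locale pg_weights =
  fixes P mm b t :: real and wp w1 g :: "real \<Rightarrow> real"
  assumes P: "P \<ge> 2" and mm: "mm > 0" and b: "b > 0"
    and wp_def: "wp = (\<lambda>z. 2 / (P + sqrt ((P - 2)\<^sup>2 + 4 * (P - 1) *
              ((1 + mm / b * exp t) / (1 + mm / b * exp (t - z))))))"
    and w1_def: "w1 = (\<lambda>z. (1 - wp z) / (P - 1))"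
    and g_def: "g = (\<lambda>z. mm * ((P - 1) * w1 z * exp (t - z) + wp z * exp t)
                  * (z * (P - 1) * w1 z - 2) + b * (z * P * w1 z - 2))"
begin

definition ratio where "ratio z = (1 + mm / b * exp t) / (1 + mm / b * exp (t - z))"
text \<open>The weighted total intensity \<open>e\<^sub>1\<^sup>T M\<^sub>P\<^sub>o e\<^sub>1\<close> of the design with weights \<open>wp z\<close>, \<open>w1 z\<close>.\<close>

definition total_intensity where "total_intensity z = (P - 1) * w1 z * exp (t - z) + wp z * exp t"

lemma ratio_pos: "ratio z > 0" unfolding ratio_def using mm b by (intro divide_pos_pos add_pos_pos) auto

lemma ratio_gt_1: "z > 0 \<Longrightarrow> ratio z > 1"
proof -
  assume z: "z > 0"
  have d: "0 < 1 + mm / b * exp (t - z)" using mm b by (intro add_pos_pos) auto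
  have "exp (t - z) < exp t" using z by simp
  then have "mm / b * exp (t - z) < mm / b * exp t" using mm b by (intro mult_strict_left_mono) auto
  then have "1 + mm / b * exp (t - z) < 1 + mm / b * exp t" by simp
  then show ?thesis unfolding ratio_def using d by (simp add: less_divide_eq_1_pos)
qed

lemma ratio_strict_mono: "z1 < z2 \<Longrightarrow> ratio z1 < ratio z2"
proof -
  assume z: "z1 < z2"
  have "exp (t - z2) < exp (t - z1)" using z by simp
  then have "mm / b * exp (t - z2) < mm / b * exp (t - z1)" using mm b by (intro mult_strict_left_mono) auto
  then show ?thesis unfolding ratio_def using mm b
    by (intro divide_strict_left_mono) (auto intro!: add_pos_pos mult_pos_pos)
qed

lemma wp_eq_ratio: "wp z = 2 / (P + sqrt ((P - 2)\<^sup>2 + 4 * (P - 1) * ratio z))"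
  unfolding wp_def ratio_def by simp

lemma sqrt_disc_gt: "z > 0 \<Longrightarrow> sqrt ((P - 2)\<^sup>2 + 4 * (P - 1) * ratio z) > P"
proof -
  assume z: "z > 0"
  have "(P - 2)\<^sup>2 + 4 * (P - 1) * 1 < (P - 2)\<^sup>2 + 4 * (P - 1) * ratio z"
    using ratio_gt_1[OF z] P by (intro add_strict_left_mono mult_strict_left_mono) auto
  moreover have "(P - 2)\<^sup>2 + 4 * (P - 1) * 1 = P\<^sup>2" by (simp add: power2_eq_square algebra_simps)
  ultimately have "sqrt (P\<^sup>2) < sqrt ((P - 2)\<^sup>2 + 4 * (P - 1) * ratio z)"
    by (intro real_sqrt_less_mono) simp
  moreover have "sqrt (P\<^sup>2) = P" using P by simp
  ultimately show ?thesis by simp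
qed

lemma disc_nonneg: "0 \<le> (P - 2)\<^sup>2 + 4 * (P - 1) * ratio z"
  using P ratio_pos[of z] by (intro add_nonneg_nonneg) auto

lemma wp_denom_pos: "P + sqrt ((P - 2)\<^sup>2 + 4 * (P - 1) * ratio z) > 0"
  using P disc_nonneg[of z] by (intro add_pos_nonneg) auto

lemma wp_pos: "wp z > 0"
  unfolding wp_eq_ratio using wp_denom_pos[of z] by (intro divide_pos_pos) auto

lemma wp_lt_inverse: "z > 0 \<Longrightarrow> wp z < 1 / P"
proof -
  assume z: "z > 0"
  have "2 / (P + sqrt ((P - 2)\<^sup>2 + 4 * (P - 1) * ratio z)) < 2 / (P + P)"
    using sqrt_disc_gt[OF z] P by (intro divide_strict_left_mono) auto
  then show ?thesis unfolding wp_eq_ratio using P by simp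
qed

lemma wp_antimono: "z1 < z2 \<Longrightarrow> wp z2 \<le> wp z1"
proof -
  assume z: "z1 < z2"
  have "sqrt ((P - 2)\<^sup>2 + 4 * (P - 1) * ratio z1) \<le> sqrt ((P - 2)\<^sup>2 + 4 * (P - 1) * ratio z2)"
    using ratio_strict_mono[OF z] P by (intro real_sqrt_le_mono add_left_mono mult_left_mono) auto
  then show ?thesis unfolding wp_eq_ratio using wp_denom_pos[of z1] wp_denom_pos[of z2]
    by (intro divide_left_mono) (auto intro!: mult_pos_pos)
qed

lemma wp_lt_1: "z > 0 \<Longrightarrow> wp z < 1"
proof -
  assume z: "z > 0"
  have "1 / P \<le> 1" using P by simp
  then show ?thesis using wp_lt_inverse[OF z] by linarith
qed

lemma w1_pos: "z > 0 \<Longrightarrow> w1 z > 0"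
  unfolding w1_def using wp_lt_1[of z] P by (auto intro!: divide_pos_pos)

lemma w1_gt_inverse: "z > 0 \<Longrightarrow> w1 z > 1 / P"
proof -
  assume z: "z > 0"
  have "1 - 1/P < 1 - wp z" using wp_lt_inverse[OF z] by simp
  then have "(1 - 1/P) / (P - 1) < (1 - wp z) / (P - 1)" using P by (intro divide_strict_right_mono) auto
  moreover have "(1 - 1/P) / (P - 1) = 1 / P" using P by (simp add: field_simps)
  ultimately show ?thesis unfolding w1_def by simp
qed

lemma w1_le_inverse: "w1 z \<le> 1 / (P - 1)"
  unfolding w1_def using wp_pos[of z] P by (intro divide_right_mono) auto

lemma w1_mono: "z1 < z2 \<Longrightarrow> w1 z1 \<le> w1 z2"
  unfolding w1_def using wp_antimono[of z1 z2] P by (intro divide_right_mono) auto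

lemma total_intensity_eq: "total_intensity z = exp t * (1 - (1 - wp z) * (1 - exp (-z)))"
  unfolding total_intensity_def using P by (simp add: w1_def exp_diff exp_minus field_simps)

lemma total_intensity_pos: "z > 0 \<Longrightarrow> total_intensity z > 0"
  unfolding total_intensity_def using w1_pos[of z] wp_pos[of z] P by (intro add_pos_pos mult_pos_pos) auto

lemma total_intensity_antimono: "0 < z1 \<Longrightarrow> z1 < z2 \<Longrightarrow> total_intensity z2 \<le> total_intensity z1"
proof -
  assume z: "0 < z1" "z1 < z2"
  have a: "0 \<le> 1 - wp z1" using wp_lt_1[of z1] z by simp
  have b1: "0 \<le> 1 - exp (-z1)" using z by simp
  have "(1 - wp z1) * (1 - exp (-z1)) \<le> (1 - wp z2) * (1 - exp (-z2))"
    using wp_antimono[OF z(2)] z a b1 by (intro mult_mono) auto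
  then show ?thesis unfolding total_intensity_eq by (intro mult_left_mono) auto
qed

definition g_scaled where "g_scaled z = z * w1 z * (P - 1 + b / (mm * total_intensity z + b)) - 2"

lemma scale_pos: "z > 0 \<Longrightarrow> 0 < mm * total_intensity z + b"
  using total_intensity_pos[of z] mm b by (intro add_pos_pos mult_pos_pos)

lemma g_eq_scaled: "z > 0 \<Longrightarrow> g z = (mm * total_intensity z + b) * g_scaled z"
  using scale_pos[of z] unfolding g_scaled_def g_def total_intensity_def
  by (simp add: field_simps)

lemma g_scaled_strict_mono:
  assumes z: "0 < z1" "z1 < z2"
  shows "g_scaled z1 < g_scaled z2"
proof -
  define F where "F z = P - 1 + b / (mm * total_intensity z + b)" for z
  have F: "F z1 > 0" unfolding F_def using P b scale_pos[OF z(1)] by (intro add_pos_nonneg) auto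
  have "b / (mm * total_intensity z1 + b) \<le> b / (mm * total_intensity z2 + b)"
    using total_intensity_antimono[OF z] mm b scale_pos[of z1] scale_pos[of z2] z
    by (intro divide_left_mono) auto
  then have F_mono: "F z1 \<le> F z2" unfolding F_def by simp
  have "z1 * (w1 z1 * F z1) < z2 * (w1 z1 * F z1)"
    using z w1_pos[OF z(1)] F by (intro mult_strict_right_mono) auto
  also have "\<dots> \<le> z2 * (w1 z2 * F z2)"
    using z w1_pos[OF z(1)] F w1_mono[OF z(2)] F_mono by (intro mult_left_mono mult_mono) auto
  finally show ?thesis unfolding g_scaled_def F_def[symmetric] by (simp add: mult.assoc)
qed

lemma g_scaled_le: "z > 0 \<Longrightarrow> g_scaled z \<le> z * P / (P - 1) - 2"
proof -
  assume z: "z > 0"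
  have "b / (mm * total_intensity z + b) \<le> 1"
    using scale_pos[OF z] mm total_intensity_pos[OF z] by simp
  then have "z * w1 z * (P - 1 + b / (mm * total_intensity z + b)) \<le> z * (1 / (P - 1)) * P"
    using z w1_le_inverse[of z] w1_pos[OF z] P scale_pos[OF z] b
    by (intro mult_mono mult_left_mono) auto
  then show ?thesis unfolding g_scaled_def by simp
qed

lemma g_scaled_gt: "z > 0 \<Longrightarrow> z * (P - 1) / P - 2 < g_scaled z"
proof -
  assume z: "z > 0"
  have "1 / P * (P - 1) < w1 z * (P - 1)" using w1_gt_inverse[OF z] P by (intro mult_strict_right_mono) auto
  also have "\<dots> \<le> w1 z * (P - 1 + b / (mm * total_intensity z + b))"
    using w1_pos[OF z] scale_pos[OF z] b by (intro mult_left_mono) auto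
  finally have "z * (1 / P * (P - 1)) < z * (w1 z * (P - 1 + b / (mm * total_intensity z + b)))"
    using z by (intro mult_strict_left_mono)
  then show ?thesis unfolding g_scaled_def by (simp add: mult.assoc)
qed

lemma continuous_on_g: "continuous_on S g"
proof -
  have "1 + mm / b * exp (t - z) \<noteq> 0" for z
    using mm b by (smt (verit) divide_pos_pos exp_gt_zero mult_pos_pos)
  moreover have "P + sqrt ((P - 2)\<^sup>2 + 4 * (P - 1) * ((1 + mm / b * exp t) / (1 + mm / b * exp (t - z)))) \<noteq> 0"
    for z using wp_denom_pos[of z] unfolding ratio_def by simp
  moreover have "P - 1 \<noteq> 0" using P by simp
  ultimately show ?thesis unfolding g_def w1_def wp_def
    by (intro continuous_intros) (auto simp only: not_False_eq_True)
qed

lemma g_has_root: "\<exists>z>0. g z = 0"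
proof -
  have "1 / 2 * P / (P - 1) - 2 < 0" using P by (simp add: field_simps)
  then have "g_scaled (1 / 2) < 0" using g_scaled_le[of "1 / 2"] by simp
  moreover have "0 < g_scaled (2 * P + 1)"
  proof -
    have "0 \<le> (P - 2) * (2 * P + 1)" using P by simp
    then have "0 \<le> (2 * P + 1) * (P - 1) / P - 2" using P by (simp add: field_simps)
    then show ?thesis using g_scaled_gt[of "2 * P + 1"] P by simp
  qed
  ultimately have "g (1 / 2) \<le> 0" "0 \<le> g (2 * P + 1)"
    using g_eq_scaled scale_pos P by (simp_all add: mult_pos_neg less_imp_le)
  then obtain z where "1 / 2 \<le> z" "g z = 0"
    using IVT'[where f = g and a = "1 / 2" and b = "2 * P + 1" and y = 0] P continuous_on_g by auto
  then show ?thesis by (intro exI[of _ z]) simp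
qed

lemma g_unique_root: "\<exists>!z. z > 0 \<and> g z = 0"
proof -
  have root_iff: "g z = 0 \<longleftrightarrow> g_scaled z = 0" if "z > 0" for z
    using g_eq_scaled[OF that] scale_pos[OF that] by simp
  have "z1 = z2" if "z1 > 0" "g z1 = 0" "z2 > 0" "g z2 = 0" for z1 z2
    using g_scaled_strict_mono[of z1 z2] g_scaled_strict_mono[of z2 z1] that root_iff
    by (cases z1 z2 rule: linorder_cases) auto
  then show ?thesis using g_has_root by blast
qed

text \<open>\<open>wp z\<close> is the positive root of \<open>(P - 1) V w\<^sup>2 + P U w - U\<close> in rationalised form, since
  \<open>ratio z = (U + V) / U\<close>.\<close>

lemma wp_quadratic:
  fixes z :: real
  defines "U \<equiv> exp t * exp (- z) + b / mm" and "V \<equiv> exp t * (1 - exp (- z))"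
  shows "U - P * U * wp z - (P - 1) * V * (wp z)\<^sup>2 = 0"
proof -
  define w where "w = wp z"
  define sq where "sq = sqrt ((P - 2)\<^sup>2 + 4 * (P - 1) * ratio z)"
  have U: "U > 0" unfolding U_def using mm b by (intro add_pos_pos) auto
  have "ratio z = (1 + exp t * (mm / b)) / (1 + exp t * exp (- z) * (mm / b))"
    unfolding ratio_def by (simp add: exp_diff exp_minus field_simps)
  also have "\<dots> = ((U + V) / (b / mm)) / (U / (b / mm))"
  proof -
    have "1 + exp t * (mm / b) = (U + V) / (b / mm)" "1 + exp t * exp (- z) * (mm / b) = U / (b / mm)"
      unfolding U_def V_def using mm b by (simp_all add: field_simps)
    then show ?thesis by simp
  qed
  also have "\<dots> = (U + V) / U" using mm b by simp
  finally have sq2: "sq\<^sup>2 = (P - 2)\<^sup>2 + 4 * (P - 1) * ((U + V) / U)"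
    unfolding sq_def using disc_nonneg[of z] by simp
  have "P + sq > 0" unfolding sq_def by (rule wp_denom_pos)
  then have "w * (P + sq) = 2" unfolding w_def wp_eq_ratio sq_def[symmetric] by (simp add: field_simps)
  then have "w * sq = 2 - P * w" by (simp add: algebra_simps)
  then have "(w * sq)\<^sup>2 = (2 - P * w)\<^sup>2" by simp
  then have "U * (2 - P * w)\<^sup>2 = w\<^sup>2 * (U * (P - 2)\<^sup>2 + 4 * (P - 1) * (U + V))"
    unfolding power_mult_distrib sq2 using U by (simp add: field_simps)
  then show ?thesis unfolding w_def[symmetric] by (simp add: power2_eq_square algebra_simps)
qed

lemma total_intensity_balance:
  "total_intensity z + b / mm - wp z * exp t + wp z * total_intensity z
     = P * wp z * (total_intensity z + b / mm)"
  using wp_quadratic[of z] unfolding total_intensity_eq by (simp add: power2_eq_square algebra_simps)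

text \<open>The sensitivity function equals \<open>P\<close> at the support points: at the corner \<open>d\<close> \<dots>\<close>

lemma sensitivity_eq_at_corner:
  assumes z: "z > 0"
  shows "1 / wp z - exp t / (total_intensity z + b / mm) + total_intensity z / (total_intensity z + b / mm) = P"
proof -
  define S where "S = total_intensity z + b / mm"
  have S: "S > 0" unfolding S_def using total_intensity_pos[OF z] mm b by (intro add_pos_pos) auto
  have "S - wp z * exp t + wp z * total_intensity z = P * wp z * S"
    using total_intensity_balance[of z] unfolding S_def .
  then show ?thesis unfolding S_def[symmetric] using S wp_pos[of z] by (simp add: field_simps)
qed

lemma w1_identity:
  "w1 z * ((P - 1) * (total_intensity z + b / mm) + b / mm)
     = total_intensity z + b / mm - exp t * w1 z * exp (- z)"
proof -
  define w N E \<rho> c where "w = wp z" and "N = total_intensity z" and "E = exp t"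
    and "\<rho> = exp (- z)" and "c = b / mm"
  have N: "N = E * w + E * (1 - w) * \<rho>"
    unfolding N_def total_intensity_eq w_def E_def \<rho>_def by (simp add: algebra_simps)
  have "N + c - w * E + w * N - P * w * (N + c) = 0"
    using total_intensity_balance[of z] unfolding N_def w_def E_def c_def by simp
  moreover have "(1 - w) * ((P - 1) * (N + c) + c) - ((P - 1) * (N + c) - E * (1 - w) * \<rho>)
      = (N + c - w * E + w * N - P * w * (N + c)) + (E * (1 - w) * \<rho> + E * w - N)"
    by (simp add: algebra_simps)
  ultimately have "(1 - w) * ((P - 1) * (N + c) + c) = (P - 1) * (N + c) - E * (1 - w) * \<rho>"
    using N by simp
  moreover have "P - 1 \<noteq> 0" using P by simp
  ultimately have "(1 - w) / (P - 1) * ((P - 1) * (N + c) + c) = N + c - E * ((1 - w) / (P - 1)) * \<rho>"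
    by (simp add: field_simps)
  moreover have "w1 z = (1 - w) / (P - 1)" unfolding w_def w1_def by simp
  ultimately show ?thesis unfolding N_def E_def \<rho>_def c_def by simp
qed

text \<open>\<dots> and at the other support points \<open>d - (z / \<beta>\<^sub>i) e\<^sub>i\<close>.\<close>

lemma sensitivity_eq_at_support:
  assumes z: "z > 0"
  shows "exp (- z) * (1 / (w1 z * exp (- z)) - exp t / (total_intensity z + b / mm))
           + total_intensity z / (total_intensity z + b / mm) = P"
proof -
  define S where "S = total_intensity z + b / mm"
  have S: "S > 0" unfolding S_def using total_intensity_pos[OF z] mm b by (intro add_pos_pos) auto
  have w1: "w1 z > 0" by (rule w1_pos[OF z])
  have "exp (- z) * (1 / (w1 z * exp (- z)) - exp t / S) + total_intensity z / S
      = (S - exp t * w1 z * exp (- z) + w1 z * total_intensity z) / (w1 z * S)"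
    using S w1 by (simp add: field_simps)
  also have "\<dots> = w1 z * ((P - 1) * S + b / mm + total_intensity z) / (w1 z * S)"
    using w1_identity[of z] unfolding S_def[symmetric] by (simp add: algebra_simps)
  also have "(P - 1) * S + b / mm + total_intensity z = P * S"
    unfolding S_def using mm by (simp add: field_simps)
  finally show ?thesis unfolding S_def[symmetric] using S w1 by simp
qed

text \<open>At a root of \<open>g\<close> the sensitivity along the ray from \<open>d\<close> through a support point is
  stationary at the support point.\<close>

lemma g_root_iff:
  assumes z: "z > 0"
  shows "g z = 0 \<longleftrightarrow>
    2 * (1 / (w1 z * exp (- z))) / z - 1 / (w1 z * exp (- z)) + exp t / (total_intensity z + b / mm) = 0"
proof -
  define c where "c = b / mm"
  define s where "s = total_intensity z + c"
  have s: "s > 0" unfolding s_def c_def using total_intensity_pos[OF z] b mm by (intro add_pos_pos) auto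
  have w1: "w1 z > 0" by (rule w1_pos[OF z])
  have bc: "b / (mm * total_intensity z + b) = c / s"
    unfolding c_def s_def using mm scale_pos[OF z] by (simp add: field_simps)
  have "g z = 0 \<longleftrightarrow> g_scaled z = 0" using g_eq_scaled[OF z] scale_pos[OF z] by simp
  also have "\<dots> \<longleftrightarrow> z * w1 z * ((P - 1) * s + c) = 2 * s"
    unfolding g_scaled_def bc using s by (simp add: field_simps)
  also have "\<dots> \<longleftrightarrow> z * (s - exp t * w1 z * exp (- z)) = 2 * s"
    using w1_identity[of z] unfolding s_def c_def by (simp add: mult.assoc)
  also have "\<dots> \<longleftrightarrow> 2 * (1 / (w1 z * exp (- z))) / z - 1 / (w1 z * exp (- z)) + exp t / s = 0"
    using z w1 s by (simp add: field_simps) (auto simp: algebra_simps)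
  finally show ?thesis unfolding s_def c_def .
qed

text \<open>The left-hand side is the sensitivity at a point whose linear predictor is \<open>s\<close> below the
  corner's, where \<open>Q\<close> is the sum of the squared coordinate-wise drops.\<close>

lemma sensitivity_bound:
  assumes z: "z > 0" and root: "g z = 0" and s: "0 \<le> s" and Q: "Q \<le> s\<^sup>2"
  shows "exp t * exp (- s) * ((1 - s / z)\<^sup>2 / (wp z * exp t) + Q / (z\<^sup>2 * (w1 z * exp t * exp (- z)))
           - 1 / (total_intensity z + b / mm)) + total_intensity z / (total_intensity z + b / mm) \<le> P"
proof -
  define K0 where "K0 = 1 / wp z"
  define K1 where "K1 = 1 / (w1 z * exp (- z))"
  define D where "D = exp t / (total_intensity z + b / mm)"
  define C where "C = total_intensity z / (total_intensity z + b / mm)"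
  have wp: "wp z > 0" and w1: "w1 z > 0" using wp_pos w1_pos[OF z] .
  have "K0 - D + C = P"
    using sensitivity_eq_at_corner[OF z] unfolding K0_def D_def C_def by simp
  moreover have "exp (- z) * (K1 - D) + C = P"
    using sensitivity_eq_at_support[OF z] unfolding K1_def D_def C_def by simp
  moreover have "D = K1 - 2 * K1 / z"
    using g_root_iff[OF z] root unfolding K1_def D_def by simp
  ultimately have "exp (- s) * (K0 * (1 - s / z)\<^sup>2 + K1 * s\<^sup>2 / z\<^sup>2 - D) + C \<le> P"
    using z wp w1 s unfolding K0_def K1_def by (intro sensitivity_profile_le) auto
  moreover have "Q / (z\<^sup>2 * (w1 z * exp t * exp (- z))) \<le> s\<^sup>2 / (z\<^sup>2 * (w1 z * exp t * exp (- z)))"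
    using Q z w1 by (intro divide_right_mono) auto
  moreover have "exp t * exp (- s) * ((1 - s / z)\<^sup>2 / (wp z * exp t) + s\<^sup>2 / (z\<^sup>2 * (w1 z * exp t * exp (- z)))
           - 1 / (total_intensity z + b / mm)) = exp (- s) * (K0 * (1 - s / z)\<^sup>2 + K1 * s\<^sup>2 / z\<^sup>2 - D)"
    unfolding K0_def K1_def D_def using z wp w1 by (simp add: field_simps)
  ultimately show ?thesis unfolding C_def
    by (smt (verit) exp_gt_zero mult_left_mono mult_pos_pos)
qed

end

section \<open>The corner design\<close>

lemma fvec_index: "j < Suc (dim_vec x) \<Longrightarrow> fvec x $ j = (if j = 0 then 1 else x $ (j - 1))"
  unfolding fvec_def by (simp add: vec_index_vCons)

lemma fvec_dot:
  assumes "dim_vec \<beta> = Suc (dim_vec x)"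
  shows "fvec x \<bullet> \<beta> = \<beta> $ 0 + (\<Sum>i<dim_vec x. x $ i * \<beta> $ Suc i)"
proof -
  have "fvec x \<bullet> \<beta> = (\<Sum>j<Suc (dim_vec x). fvec x $ j * \<beta> $ j)"
    unfolding scalar_prod_def using assms by (simp add: fvec_def atLeast0LessThan)
  also have "\<dots> = \<beta> $ 0 + (\<Sum>i<dim_vec x. x $ i * \<beta> $ Suc i)"
    by (simp only: sum.lessThan_Suc_shift) (simp add: fvec_index)
  finally show ?thesis .
qed

lemma sum_squares_le_square_sum_nonpos:
  fixes y :: "'a \<Rightarrow> real"
  assumes "finite A" "\<forall>i\<in>A. y i \<le> 0"
  shows "(\<Sum>i\<in>A. (y i)\<^sup>2) \<le> (\<Sum>i\<in>A. y i)\<^sup>2"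
  using assms
proof (induction A rule: finite_induct)
  case (insert a A)
  then have "0 \<le> y a * (\<Sum>i\<in>A. y i)" by (simp add: mult_nonpos_nonpos sum_nonpos)
  then show ?case using insert by (simp add: power2_eq_square algebra_simps)
qed simp

locale corner_design = pg_weights "real p" "real m" b "fvec d \<bullet> \<beta>" wp w1 g
  for p m :: nat and b :: real and d \<beta> :: "real vec" and wp w1 g :: "real \<Rightarrow> real" +
  fixes u v :: "real vec" and z :: real
  assumes dim_\<beta>: "dim_vec \<beta> = p" and u_less_v: "\<forall>i<p - 1. u $ i < v $ i"
    and \<beta>_nonzero: "\<forall>i<p - 1. \<beta> $ Suc i \<noteq> 0"
    and d_eq: "d = vec (p - 1) (\<lambda>i. if \<beta> $ Suc i > 0 then v $ i else u $ i)"
    and z_pos: "z > 0" and root: "g z = 0"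
    and z_le: "\<forall>i<p - 1. z \<le> \<bar>\<beta> $ Suc i\<bar> * (v $ i - u $ i)"
begin

text \<open>Support points are indexed like the entries of \<open>fvec\<close>: \<open>0\<close> is the corner \<open>d\<close>, and
  \<open>l \<ge> 1\<close> moves along coordinate \<open>l - 1\<close> of \<open>x\<close>, whose coefficient is \<open>\<beta> $ l\<close>.\<close>

definition support_point :: "nat \<Rightarrow> real vec" where
  "support_point l = (if l = 0 then d else d - (z / \<beta> $ l) \<cdot>\<^sub>v unit_vec (p - 1) (l - 1))"

definition design :: "real vec \<Rightarrow> real" where
  "design x = (if x = d then wp z
     else if (\<exists>i<p - 1. x = d - (z / \<beta> $ Suc i) \<cdot>\<^sub>v unit_vec (p - 1) i) then w1 z else 0)"

lemma p_Suc: "p = Suc (p - 1)" and p_ge_2: "p \<ge> 2" and p_pos: "0 < p"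
  using P by linarith+

lemma sum_lessThan_p: "(\<Sum>l<p. f l) = f 0 + (\<Sum>l<p - 1. f (Suc l))"
proof -
  have "(\<Sum>l<p. f l) = (\<Sum>l<Suc (p - 1). f l)" by (simp only: p_Suc[symmetric])
  then show ?thesis by (simp only: sum.lessThan_Suc_shift)
qed

lemma dim_d: "dim_vec d = p - 1"
  unfolding d_eq by simp

lemma d_index: "i < p - 1 \<Longrightarrow> d $ i = (if \<beta> $ Suc i > 0 then v $ i else u $ i)"
  unfolding d_eq by simp

lemma \<beta>_index_nonzero: "0 < l \<Longrightarrow> l < p \<Longrightarrow> \<beta> $ l \<noteq> 0"
  using \<beta>_nonzero[rule_format, of "l - 1"] by simp

lemma support_point_dim: "dim_vec (support_point l) = p - 1"
  unfolding support_point_def using dim_d by simp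

lemma support_point_index:
  "k < p - 1 \<Longrightarrow> support_point l $ k = d $ k - (if l \<noteq> 0 \<and> k = l - 1 then z / \<beta> $ l else 0)"
  unfolding support_point_def using dim_d by (auto simp: unit_vec_def)

lemma inj_on_support_point: "inj_on support_point {..<p}"
proof -
  have "support_point l \<noteq> support_point l'" if "l \<noteq> 0" "l < p" "l \<noteq> l'" for l l'
  proof -
    have k: "l - 1 < p - 1" using that by simp
    have "\<beta> $ l \<noteq> 0" using \<beta>_index_nonzero that by simp
    then have "support_point l $ (l - 1) \<noteq> support_point l' $ (l - 1)"
      using z_pos that unfolding support_point_index[OF k] by auto
    then show ?thesis by metis
  qed
  then show ?thesis by (intro inj_onI) (metis lessThan_iff)
qed

lemma support_point_0: "support_point 0 = d"
  unfolding support_point_def by simp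

lemma design_support_point: "l < p \<Longrightarrow> design (support_point l) = (if l = 0 then wp z else w1 z)"
proof (cases "l = 0")
  case False
  assume l: "l < p"
  have "support_point l \<noteq> support_point 0"
  proof
    assume "support_point l = support_point 0"
    then have "l = 0" by (rule inj_onD[OF inj_on_support_point]) (use l p_ge_2 in auto)
    with False show False ..
  qed
  moreover have "\<exists>i<p - 1. support_point l = d - (z / \<beta> $ Suc i) \<cdot>\<^sub>v unit_vec (p - 1) i"
    using False l unfolding support_point_def by (intro exI[of _ "l - 1"]) simp
  ultimately show ?thesis using False unfolding design_def support_point_0 by (simp only: if_not_P if_P)
qed (simp add: design_def support_point_0)

lemma supp_design: "supp design = support_point ` {..<p}"
proof
  show "supp design \<subseteq> support_point ` {..<p}"
  proof
    fix x assume "x \<in> supp design"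
    then have "x = d \<or> (\<exists>i<p - 1. x = support_point (Suc i))"
      unfolding supp_def design_def support_point_def by (auto split: if_splits)
    moreover have "support_point 0 = d" "0 < p" using p_ge_2 by (simp_all add: support_point_def)
    ultimately show "x \<in> support_point ` {..<p}" by (metis Suc_less_eq image_eqI lessThan_iff p_Suc)
  qed
  show "support_point ` {..<p} \<subseteq> supp design"
    using design_support_point wp_pos[of z] w1_pos[OF z_pos] unfolding supp_def by (auto split: if_splits)
qed

lemma support_point_in_region:
  assumes l: "l < p"
  shows "support_point l \<in> region p u v"
proof -
  have "u $ k \<le> support_point l $ k \<and> support_point l $ k \<le> v $ k" if k: "k < p - 1" for k
  proof (cases "l \<noteq> 0 \<and> k = l - 1")
    case False
    then show ?thesis using u_less_v k unfolding support_point_index[OF k] d_index[OF k] by auto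
  next
    case True
    then have l: "l = Suc k" by simp
    have "z \<le> \<bar>\<beta> $ Suc k\<bar> * (v $ k - u $ k)" "u $ k < v $ k" using z_le u_less_v k by auto
    moreover have "\<beta> $ Suc k \<noteq> 0" using \<beta>_nonzero k by auto
    ultimately show ?thesis
      using z_pos unfolding support_point_index[OF k] d_index[OF k] l
      by (cases "\<beta> $ Suc k > 0") (auto simp: field_simps abs_if)
  qed
  then show ?thesis unfolding region_def using support_point_dim by simp
qed

lemma is_design_design: "is_design (region p u v) design"
  unfolding is_design_def
proof (intro conjI allI)
  show "finite (supp design)" unfolding supp_design by simp
  show "supp design \<subseteq> region p u v" unfolding supp_design using support_point_in_region by auto
  show "0 \<le> design x" for x unfolding design_def using wp_pos w1_pos[OF z_pos] by (simp add: less_imp_le)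
  have "(\<Sum>x\<in>supp design. design x) = (\<Sum>l<p. design (support_point l))"
    unfolding supp_design by (simp add: sum.reindex[OF inj_on_support_point])
  also have "\<dots> = wp z + real (p - 1) * w1 z"
    unfolding sum_lessThan_p using design_support_point p_ge_2 by simp
  also have "\<dots> = 1" using p_ge_2 by (simp add: w1_def of_nat_diff)
  finally show "(\<Sum>x\<in>supp design. design x) = 1" .
qed


definition support_intensity :: "nat \<Rightarrow> real" where
  "support_intensity l = design (support_point l) * exp (fvec (support_point l) \<bullet> \<beta>)"

definition support_row :: "nat \<Rightarrow> nat \<Rightarrow> real" where
  "support_row l j = fvec (support_point l) $ j"

lemma fvec_support_point_dot:
  assumes l: "l < p"
  shows "fvec (support_point l) \<bullet> \<beta> = fvec d \<bullet> \<beta> - (if l = 0 then 0 else z)"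
proof -
  have dims: "dim_vec \<beta> = Suc (dim_vec (support_point l))" "dim_vec \<beta> = Suc (dim_vec d)"
    using dim_\<beta> p_Suc support_point_dim dim_d by simp_all
  have "(\<Sum>k<p - 1. support_point l $ k * \<beta> $ Suc k)
      = (\<Sum>k<p - 1. d $ k * \<beta> $ Suc k - (if k = l - 1 \<and> l \<noteq> 0 then z / \<beta> $ l * \<beta> $ Suc k else 0))"
    by (intro sum.cong refl) (auto simp: support_point_index left_diff_distrib)
  also have "\<dots> = (\<Sum>k<p - 1. d $ k * \<beta> $ Suc k) - (if l = 0 then 0 else z)"
  proof (cases "l = 0")
    case False
    then have "l - 1 < p - 1" "Suc (l - 1) = l" "\<beta> $ l \<noteq> 0" using l \<beta>_index_nonzero by auto
    then show ?thesis using False by (simp add: sum_subtractf sum.delta')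
  qed simp
  finally show ?thesis
    unfolding fvec_dot[OF dims(1)] fvec_dot[OF dims(2)] support_point_dim dim_d by simp
qed

lemma support_intensity_eq:
  "l < p \<Longrightarrow> support_intensity l
    = (if l = 0 then wp z * exp (fvec d \<bullet> \<beta>) else w1 z * exp (fvec d \<bullet> \<beta>) * exp (- z))"
  unfolding support_intensity_def design_support_point fvec_support_point_dot
  by (simp add: exp_diff exp_minus field_simps)

lemma support_intensity_pos: "l < p \<Longrightarrow> 0 < support_intensity l"
  using support_intensity_eq wp_pos[of z] w1_pos[OF z_pos] by simp

lemma sum_support_intensity: "(\<Sum>l<p. support_intensity l) = total_intensity z"
  unfolding sum_lessThan_p total_intensity_def using support_intensity_eq p_ge_2
  by (simp add: exp_diff exp_minus field_simps of_nat_diff)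

lemma support_row_eq:
  assumes "l < p" "j < p"
  shows "support_row l j = fvec d $ j - (if l \<noteq> 0 \<and> j = l then z / \<beta> $ l else 0)"
proof (cases j)
  case (Suc k)
  then have "k < p - 1" using assms by simp
  then show ?thesis
    unfolding support_row_def Suc using support_point_dim dim_d
    by (auto simp: fvec_index support_point_index)
qed (simp add: support_row_def fvec_def)

lemma support_row_0: "support_row l 0 = 1"
  unfolding support_row_def fvec_def by simp

lemma support_rows_independent:
  assumes rows: "\<forall>l\<in>{..<p}. (\<Sum>i<p. support_row l i * x i) = 0"
  shows "\<forall>i<p. x i = 0"
proof -
  define T where "T = (\<Sum>i<p. fvec d $ i * x i)"
  have row: "(\<Sum>i<p. support_row l i * x i) = T - (if l = 0 then 0 else z / \<beta> $ l * x l)"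
    if l: "l < p" for l
  proof -
    have "(\<Sum>i<p. support_row l i * x i)
        = (\<Sum>i<p. fvec d $ i * x i - (if i = l then (if l = 0 then 0 else z / \<beta> $ l * x l) else 0))"
      using l by (intro sum.cong refl) (auto simp: support_row_eq left_diff_distrib)
    then show ?thesis unfolding T_def using l by (simp add: sum_subtractf)
  qed
  have T: "T = 0" using rows row[of 0] p_ge_2 by simp
  have x_Suc: "x (Suc k) = 0" if k: "k < p - 1" for k
  proof -
    have "z / \<beta> $ Suc k * x (Suc k) = 0" using rows row[of "Suc k"] k T by simp
    then show ?thesis using z_pos \<beta>_nonzero k by simp
  qed
  have "T = x 0" unfolding T_def sum_lessThan_p using x_Suc dim_d by (simp add: fvec_def)
  then show ?thesis using T x_Suc by (metis Suc_pred' less_Suc_eq_0_disj less_diff_conv p_Suc)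
qed

lemma det_M_PG_design:
  "det (M_PG p a b m design \<beta>)
     = (a / b) ^ p * det (mat_of p (info_mat {..<p} support_intensity support_row (b / real m)))"
  unfolding det_M_PG[OF p_pos] supp_design
    info_mat_reindex[OF inj_on_support_point] support_intensity_def support_row_def
  by simp

text \<open>For \<open>x\<close> in the region, \<open>fvec x\<close> is the affine combination of the rows \<open>support_row l\<close>
  with coefficients \<open>affine_coord x l\<close>; \<open>ray_coord x k \<le> 0\<close> is the change of the linear predictor
  when coordinate \<open>k\<close> moves from \<open>d\<close> to \<open>x\<close>.\<close>

definition ray_coord :: "real vec \<Rightarrow> nat \<Rightarrow> real" where
  "ray_coord x k = \<beta> $ Suc k * (x $ k - d $ k)"

definition affine_coord :: "real vec \<Rightarrow> nat \<Rightarrow> real" where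
  "affine_coord x l = (if l = 0 then 1 + (\<Sum>k<p - 1. ray_coord x k) / z else - ray_coord x (l - 1) / z)"

lemma ray_coord_nonpos:
  assumes "x \<in> region p u v" "k < p - 1"
  shows "ray_coord x k \<le> 0"
proof -
  have "u $ k \<le> x $ k" "x $ k \<le> v $ k" "\<beta> $ Suc k \<noteq> 0"
    using assms \<beta>_nonzero unfolding region_def by auto
  then show ?thesis
    unfolding ray_coord_def d_index[OF assms(2)]
    by (cases "\<beta> $ Suc k > 0") (auto intro: mult_nonneg_nonpos mult_nonpos_nonneg)
qed

lemma sum_affine_coord: "(\<Sum>l<p. affine_coord x l) = 1"
  unfolding sum_lessThan_p affine_coord_def by (simp add: sum_negf sum_divide_distrib)

lemma fvec_affine_combination:
  assumes x: "x \<in> region p u v" and j: "j < p"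
  shows "fvec x $ j = (\<Sum>l<p. affine_coord x l * support_row l j)"
proof -
  have "(\<Sum>l<p. affine_coord x l * support_row l j)
      = (\<Sum>l<p. fvec d $ j * affine_coord x l
           - (if l = j then (if j = 0 then 0 else affine_coord x j * (z / \<beta> $ j)) else 0))"
    using j by (intro sum.cong refl) (auto simp: support_row_eq right_diff_distrib mult.commute)
  also have "\<dots> = fvec d $ j - (if j = 0 then 0 else affine_coord x j * (z / \<beta> $ j))"
    using j by (simp add: sum_subtractf sum_distrib_left[symmetric] sum_affine_coord)
  also have "\<dots> = fvec x $ j"
  proof (cases j)
    case (Suc k)
    then have k: "k < p - 1" using j by simp
    have "affine_coord x j * (z / \<beta> $ j) = d $ k - x $ k"
      unfolding affine_coord_def ray_coord_def Suc using z_pos \<beta>_nonzero k by (simp add: field_simps)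
    then show ?thesis unfolding Suc fvec_def using x dim_d k unfolding region_def by simp
  qed (simp add: fvec_def)
  finally show ?thesis ..
qed

lemma sensitivity_le_p:
  assumes x: "x \<in> region p u v"
  defines "c \<equiv> b / real m" and "N \<equiv> \<Sum>l<p. support_intensity l"
  shows "exp (fvec x \<bullet> \<beta>) * ((\<Sum>l<p. (affine_coord x l)\<^sup>2 / support_intensity l) - 1 / (N + c))
           + N / (N + c) \<le> real p"
proof -
  define s where "s = - (\<Sum>k<p - 1. ray_coord x k)"
  have ray: "\<forall>k\<in>{..<p - 1}. ray_coord x k \<le> 0" using ray_coord_nonpos[OF x] by simp
  then have s: "0 \<le> s" unfolding s_def using sum_nonpos[of "{..<p - 1}" "ray_coord x"] by simp
  have Q: "(\<Sum>k<p - 1. (ray_coord x k)\<^sup>2) \<le> s\<^sup>2"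
    using sum_squares_le_square_sum_nonpos[OF _ ray] unfolding s_def by simp
  have dims: "dim_vec \<beta> = Suc (dim_vec x)" "dim_vec \<beta> = Suc (dim_vec d)"
    using x dim_\<beta> dim_d p_Suc unfolding region_def by simp_all
  have "fvec x \<bullet> \<beta> = fvec d \<bullet> \<beta> - s"
    using x dim_d unfolding fvec_dot[OF dims(1)] fvec_dot[OF dims(2)] s_def ray_coord_def region_def
    by (simp add: sum_subtractf algebra_simps)
  then have "exp (fvec x \<bullet> \<beta>) = exp (fvec d \<bullet> \<beta>) * exp (- s)" by (simp add: exp_add[symmetric])
  moreover have "(\<Sum>l<p. (affine_coord x l)\<^sup>2 / support_intensity l)
      = (1 - s / z)\<^sup>2 / (wp z * exp (fvec d \<bullet> \<beta>))
        + (\<Sum>k<p - 1. (ray_coord x k)\<^sup>2) / (z\<^sup>2 * (w1 z * exp (fvec d \<bullet> \<beta>) * exp (- z)))"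
    unfolding sum_lessThan_p using support_intensity_eq p_ge_2
    by (simp add: affine_coord_def s_def power_divide sum_divide_distrib)
  ultimately show ?thesis
    using sensitivity_bound[OF z_pos root s Q] unfolding N_def c_def sum_support_intensity by simp
qed

lemma det_info_mat_le_design:
  assumes w: "is_design (region p u v) w"
  defines "c \<equiv> b / real m"
  shows "det (mat_of p (info_mat (supp w) (\<lambda>x. w x * exp (fvec x \<bullet> \<beta>)) (\<lambda>x j. fvec x $ j) c))
      \<le> det (mat_of p (info_mat {..<p} support_intensity support_row c))
    \<and> 0 < det (mat_of p (info_mat {..<p} support_intensity support_row c))"
proof (rule det_info_mat_le_saturated[where a = affine_coord])
  have region: "supp w \<subseteq> region p u v" using w unfolding is_design_def by simp
  then show "\<forall>x\<in>supp w. \<forall>i<p. fvec x $ i = (\<Sum>l<p. affine_coord x l * support_row l i)"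
    using fvec_affine_combination by blast
  show "\<forall>x\<in>supp w. exp (fvec x \<bullet> \<beta>) * ((\<Sum>l<p. (affine_coord x l)\<^sup>2 / support_intensity l)
      - 1 / ((\<Sum>l<p. support_intensity l) + c)) + (\<Sum>l<p. support_intensity l)
      / ((\<Sum>l<p. support_intensity l) + c) \<le> real p"
    using region sensitivity_le_p unfolding c_def by blast
qed (use w b mm support_intensity_pos support_rows_independent sum_affine_coord support_row_0 in
    \<open>auto simp: is_design_def c_def fvec_def\<close>)

lemma D_optimal_design:
  assumes "a > 0"
  shows "D_optimal p a b m (region p u v) \<beta> design"
proof -
  have "0 \<le> (a / b) ^ p" using assms b by simp
  then have opt: "det (M_PG p a b m w \<beta>) \<le> det (M_PG p a b m design \<beta>)"
    if "is_design (region p u v) w" for w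
    using det_info_mat_le_design[OF that] unfolding det_M_PG_design
    unfolding det_M_PG[OF p_pos] by (auto intro: mult_left_mono)
  have "det (M_PG p a b m design \<beta>) \<noteq> 0"
    using det_info_mat_le_design[OF is_design_design] assms b unfolding det_M_PG_design by simp
  then show ?thesis unfolding D_optimal_def using is_design_design opt by blast
qed

end

theorem theorem8:
  fixes p m :: nat and a b :: real and u v \<beta> :: "real vec"
  assumes hp: "p \<ge> 2" and hm: "m \<ge> 1" and ha: "a > 0" and hb: "b > 0"
    and du: "dim_vec u = p - 1" and dv: "dim_vec v = p - 1" and dbeta: "dim_vec \<beta> = p"
    and huv: "\<forall>i<p - 1. u $ i < v $ i"
    and hbeta: "\<forall>i<p - 1. \<beta> $ (Suc i) \<noteq> 0"
  defines "d \<equiv> vec (p - 1) (\<lambda>i. if \<beta> $ (Suc i) > 0 then v $ i else u $ i)"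
  defines "wp \<equiv> (\<lambda>z::real. 2 / (real p + sqrt ((real p - 2)\<^sup>2 + 4 * (real p - 1) *
              ((1 + real m / b * exp (fvec d \<bullet> \<beta>)) / (1 + real m / b * exp (fvec d \<bullet> \<beta> - z))))))"
  defines "w1 \<equiv> (\<lambda>z::real. (1 - wp z) / (real p - 1))"
  defines "g \<equiv> (\<lambda>z::real. real m * ((real p - 1) * w1 z * exp (fvec d \<bullet> \<beta> - z) + wp z * exp (fvec d \<bullet> \<beta>))
                  * (z * (real p - 1) * w1 z - 2) + b * (z * real p * w1 z - 2))"
  shows "(\<exists>!z. z > 0 \<and> g z = 0) \<and>
    (\<forall>z. z > 0 \<and> g z = 0 \<and> z \<le> Min ((\<lambda>i. \<bar>\<beta> $ (Suc i)\<bar> * (v $ i - u $ i)) ` {0..<p - 1}) \<longrightarrow>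
       D_optimal p a b m (region p u v) \<beta>
         (\<lambda>x. if x = d then wp z
              else if (\<exists>i<p - 1. x = d - (z / \<beta> $ (Suc i)) \<cdot>\<^sub>v unit_vec (p - 1) i) then w1 z
              else 0))"
proof -
  interpret pg_weights "real p" "real m" b "fvec d \<bullet> \<beta>" wp w1 g
    using hp hm hb by unfold_locales (simp_all add: wp_def w1_def g_def)
  show ?thesis
  proof (intro conjI allI impI)
    show "\<exists>!z. z > 0 \<and> g z = 0" by (rule g_unique_root)
  next
    fix z assume z: "0 < z \<and> g z = 0 \<and> z \<le> Min ((\<lambda>i. \<bar>\<beta> $ Suc i\<bar> * (v $ i - u $ i)) ` {0..<p - 1})"
    then have "\<forall>i<p - 1. z \<le> \<bar>\<beta> $ Suc i\<bar> * (v $ i - u $ i)"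
      by (auto intro: order_trans[OF _ Min_le])
    then interpret corner_design p m b d \<beta> wp w1 g u v z
      using dbeta huv hbeta z by unfold_locales (simp_all add: d_def)
    show "D_optimal p a b m (region p u v) \<beta>
        (\<lambda>x. if x = d then wp z
             else if (\<exists>i<p - 1. x = d - (z / \<beta> $ (Suc i)) \<cdot>\<^sub>v unit_vec (p - 1) i) then w1 z
             else 0)"
      using D_optimal_design[OF ha] unfolding design_def .
  qed
qed

end
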